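(* Let $\beta\ge \tfrac12$ and $R>0$, and fix any distribution of the censoring pair $(L,U)$ with $\mathbb P(L\neq U)=1$. Then there is a constant $c>0$ depending only on $\beta$ and $R$ such that \[ \liminf_{n\to\infty}\ \inf_{\hat f}\ \sup_{f\in W(\beta,R)}\ \mathbb E_f\!\left(n^{\frac{2\beta}{2\beta+1}}\,\|\hat f-f\|_2^2\right)\ \ge\ c, \] where the supremum is over probability densities $f$ on $\mathbb S^1$ belonging to $W(\beta,R)$, $\mathbb E_f$ denotes expectation when $X$ has density $f$, and the infimum is over all estimators $\hat f$, i.e. all measurable functions of the observed sample $(X_1',L_1,U_1),\dots,(X_n',L_n,U_n)$.
   Context: Circle convention: $\mathbb S^1$ is identified with $[0,2\pi)$ (angles taken mod $2\pi$) with anticlockwise orientation. For $x,y\in\mathbb S^1$, the circular interval $[x,y]$ is the set of points met going anticlockwise from $x$ to $y$: it is the usual interval if $x\le y$ and $[x,2\pi)\cup[0,y]$ if $x>y$. Censoring model: $X$ is an $\mathbb S^1$-valued random variable with density $f$ (w.r.t. Lebesgue measure on $[0,2\pi)$); $(L,U)$ is a random pair in $(\mathbb S^1)^2$, independent of $X$, with $L\ne U$ a.s. The triplets $(X_i,L_i,U_i)$, $i=1,\dots,n$, are i.i.d. copies of $(X,L,U)$. Set $\Delta_i=\mathbf 1\{X_i\in[L_i,U_i]\}$ and $X_i'=X_i$ if $\Delta_i=1$, $X_i'=-\pi$ otherwise. The observations are $(X_i',L_i,U_i)_{1\le i\le n}$. $\|g\|_2^2=\int_0^{2\pi}g(x)^2dx$,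 $\langle g,h\rangle_2=\int_0^{2\pi}gh$. Trigonometric basis of $\mathbb L^2(\mathbb S^1)$: $\varphi_0=1/\sqrt{2\pi}$, and for $j\ge1$, $\varphi_{2j-1}=\pi^{-1/2}\cos(j\cdot)$, $\varphi_{2j}=\pi^{-1/2}\sin(j\cdot)$. Sobolev class: with $\alpha_j=j^\beta$ for even $j$ and $\alpha_j=(j+1)^\beta$ for odd $j$, $W(\beta,R)=\{g\in\mathbb L^2(\mathbb S^1):\ \sum_{j\ge0}\alpha_j^2|\langle g,\varphi_j\rangle_2|^2<R^2/\pi^{2\beta}\}$. *)

theory Defs
  imports "HOL-Probability.Probability"
begin

text \<open>The circle S^1 is identified with [0, 2 pi).\<close>

definition circ :: "real set" where
  "circ = {0..<2*pi}"

text \<open>Anticlockwise circular interval [x,y].\<close>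
definition circ_interval :: "real \<Rightarrow> real \<Rightarrow> real set" where
  "circ_interval x y =
     (if x \<le> y then {t \<in> circ. x \<le> t \<and> t \<le> y}
      else {t \<in> circ. x \<le> t} \<union> {t \<in> circ. t \<le> y})"

definition trig_basis :: "nat \<Rightarrow> real \<Rightarrow> real" where
  "trig_basis k x =
     (if k = 0 then 1 / sqrt (2*pi)
      else if odd k then cos (real ((k+1) div 2) * x) / sqrt pi
      else sin (real (k div 2) * x) / sqrt pi)"

definition sob_weight :: "real \<Rightarrow> nat \<Rightarrow> real" where
  "sob_weight \<beta> j = (if even j then real j powr \<beta> else real (j+1) powr \<beta>)"

definition coeff :: "(real \<Rightarrow> real) \<Rightarrow> nat \<Rightarrow> real" where
  "coeff g j = (LINT x:circ|lborel. g x * trig_basis j x)"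

definition sobolev :: "real \<Rightarrow> real \<Rightarrow> (real \<Rightarrow> real) set" where
  "sobolev \<beta> R = {g. g \<in> borel_measurable lborel
      \<and> set_integrable lborel circ (\<lambda>x. (g x)\<^sup>2)
      \<and> (\<Sum>j. ennreal ((sob_weight \<beta> j)\<^sup>2 * (coeff g j)\<^sup>2)) < ennreal (R\<^sup>2 / pi powr (2*\<beta>))}"

definition is_density :: "(real \<Rightarrow> real) \<Rightarrow> bool" where
  "is_density f \<longleftrightarrow> f \<in> borel_measurable lborel \<and> (\<forall>x\<in>circ. 0 \<le> f x)
      \<and> (\<integral>\<^sup>+x\<in>circ. ennreal (f x) \<partial>lborel) = 1"

definition censoring_law :: "(real \<times> real) measure \<Rightarrow> bool" where
  "censoring_law Q \<longleftrightarrow> prob_space Q \<and> sets Q = sets borel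
      \<and> (AE p in Q. fst p \<in> circ \<and> snd p \<in> circ \<and> fst p \<noteq> snd p)"

definition X_law :: "(real \<Rightarrow> real) \<Rightarrow> real measure" where
  "X_law f = density lborel (\<lambda>x. ennreal (f x) * indicator circ x)"

text \<open>Law of one observation (X', L, U), X independent of (L,U); X' = -pi if censored.\<close>
definition obs_law :: "(real \<times> real) measure \<Rightarrow> (real \<Rightarrow> real) \<Rightarrow> (real \<times> real \<times> real) measure" where
  "obs_law Q f = distr (X_law f \<Otimes>\<^sub>M Q) borel
      (\<lambda>(x, (l, u)). (if x \<in> circ_interval l u then x else -pi, l, u))"

definition sample_law :: "(real \<times> real) measure \<Rightarrow> (real \<Rightarrow> real) \<Rightarrow> nat \<Rightarrow> (nat \<Rightarrow> real \<times> real \<times> real) measure" where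
  "sample_law Q f n = PiM {..<n} (\<lambda>_. obs_law Q f)"

definition estimators :: "nat \<Rightarrow> ((nat \<Rightarrow> real \<times> real \<times> real) \<Rightarrow> real \<Rightarrow> real) set" where
  "estimators n = {fh. (\<lambda>(\<omega>, x). fh \<omega> x) \<in>
      borel_measurable (PiM {..<n} (\<lambda>_. (borel :: (real \<times> real \<times> real) measure)) \<Otimes>\<^sub>M lborel)}"

definition risk :: "(real \<times> real) measure \<Rightarrow> nat \<Rightarrow> ((nat \<Rightarrow> real \<times> real \<times> real) \<Rightarrow> real \<Rightarrow> real)
     \<Rightarrow> (real \<Rightarrow> real) \<Rightarrow> ennreal" where
  "risk Q n fh f = (\<integral>\<^sup>+\<omega>. (\<integral>\<^sup>+x\<in>circ. ennreal ((fh \<omega> x - f x)\<^sup>2) \<partial>lborel) \<partial>sample_law Q f n)"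

definition minimax_risk :: "real \<Rightarrow> real \<Rightarrow> (real \<times> real) measure \<Rightarrow> nat \<Rightarrow> ennreal" where
  "minimax_risk \<beta> R Q n =
     (INF fh \<in> estimators n. SUP f \<in> {f. is_density f \<and> f \<in> sobolev \<beta> R}. risk Q n fh f)"

end

theory Submission
  imports Defs
begin

text \<open>Censoring only destroys information. The censored sample is the image of the full
  sample \<open>(X\<^sub>i, L\<^sub>i, U\<^sub>i)\<close> under the censoring map, so the risk of an estimator at a
  density \<open>f\<close> is an integral over the full sample against the reference law
  \<open>(uniform \<otimes> Q)\<^sup>n\<close>, weighted by the likelihood ratio \<open>\<Prod>\<^sub>i 2\<pi> f(X\<^sub>i)\<close>, in which \<open>Q\<close>
  no longer appears. Assouad's lemma is then applied to the hypercube of densities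
  \<open>f\<^sub>S = 1/(2\<pi>) + \<gamma> \<Sum>\<^bsub>k=1..m\<^esub> \<plusminus>\<phi>\<^sub>k\<close> with \<open>m \<approx> n\<^bsup>1/(2\<beta>+1)\<^esup>\<close> and \<open>\<gamma>\<^sup>2 \<approx> 1/n\<close>: these densities
  lie in \<open>W(\<beta>,R)\<close>, Bessel's inequality bounds the \<open>L\<^sup>2\<close> loss below by the squared error on
  the \<open>m\<close> signs, and the Hellinger affinity of the sample laws at neighbouring vertices is at
  least \<open>(1 - 4\<pi>\<gamma>\<^sup>2)\<^sup>n \<ge> 3/4\<close>. The minimax risk is therefore at least
  \<open>m\<gamma>\<^sup>2/4 \<approx> n\<^bsup>-2\<beta>/(2\<beta>+1)\<^esup>\<close>.\<close>

section \<open>Orthonormality of the trigonometric basis\<close>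

lemma set_integral_circ_Icc:
  "(LINT x:circ|lborel. g x) = (LINT x:{0..2*pi}|lborel. (g x :: real))"
  unfolding circ_def
  by (rule set_integral_discrete_difference[where X="{2*pi}"]) auto

lemma set_integral_0_2pi_FTC:
  assumes "\<And>x. (F has_real_derivative f x) (at x)" "continuous_on {0..2*pi} f"
  shows "(LINT x:{0..2*pi}|lborel. f x) = F (2*pi) - F 0"
  unfolding set_lebesgue_integral_def
  by (rule integral_FTC_atLeastAtMost)
     (use assms in \<open>auto simp: has_real_derivative_iff_has_vector_derivative[symmetric]
                         intro: has_field_derivative_at_within\<close>)

lemma set_integrable_0_2pi_continuous:
  fixes f :: "real \<Rightarrow> real"
  shows "continuous_on {0..2*pi} f \<Longrightarrow> set_integrable lborel {0..2*pi} f"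
  unfolding set_integrable_def by (rule borel_integrable_compact) auto

lemma set_integral_0_2pi_cos_int:
  fixes m :: int
  shows "(LINT x:{0..2*pi}|lborel. cos (of_int m * x)) = (if m = 0 then 2*pi else 0)"
proof (cases "m = 0")
  case True then show ?thesis by (simp add: set_lebesgue_integral_def)
next
  case False
  have "(LINT x:{0..2*pi}|lborel. cos (of_int m * x))
      = sin (of_int m * (2*pi)) / of_int m - sin (of_int m * 0) / of_int m"
    by (rule set_integral_0_2pi_FTC)
       (use False in \<open>auto intro!: continuous_intros derivative_eq_intros\<close>)
  also have "\<dots> = 0" by (simp only: mult.commute[of "of_int m"] sin_int_2pin) simp
  finally show ?thesis using False by simp
qed

lemma set_integral_0_2pi_sin_int:
  fixes m :: int
  shows "(LINT x:{0..2*pi}|lborel. sin (of_int m * x)) = 0"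
proof (cases "m = 0")
  case True then show ?thesis by simp
next
  case False
  have "(LINT x:{0..2*pi}|lborel. sin (of_int m * x))
      = - cos (of_int m * (2*pi)) / of_int m - - cos (of_int m * 0) / of_int m"
    by (rule set_integral_0_2pi_FTC)
       (use False in \<open>auto intro!: continuous_intros derivative_eq_intros\<close>)
  also have "\<dots> = 0" by (simp only: mult.commute[of "of_int m"] cos_int_2pin) simp
  finally show ?thesis .
qed

lemma set_integral_0_2pi_cos_cos:
  fixes p q :: nat
  shows "(LINT x:{0..2*pi}|lborel. cos (real p * x) * cos (real q * x))
       = (if p = q then (if p = 0 then 2*pi else pi) else 0)"
proof -
  have product_to_sum: "cos (real p * x) * cos (real q * x)
      = cos (of_int (int p - int q) * x) / 2 + cos (of_int (int p + int q) * x) / 2" for x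
    by (simp add: cos_diff cos_add field_simps)
  have "(LINT x:{0..2*pi}|lborel. cos (real p * x) * cos (real q * x))
      = (LINT x:{0..2*pi}|lborel. cos (of_int (int p - int q) * x)) / 2
        + (LINT x:{0..2*pi}|lborel. cos (of_int (int p + int q) * x)) / 2"
    unfolding product_to_sum
    by (subst set_integral_add) (auto intro!: set_integrable_0_2pi_continuous continuous_intros)
  also have "\<dots> = (if p = q then (if p = 0 then 2*pi else pi) else 0)"
    unfolding set_integral_0_2pi_cos_int by auto
  finally show ?thesis .
qed

lemma set_integral_0_2pi_sin_sin:
  fixes p q :: nat
  shows "(LINT x:{0..2*pi}|lborel. sin (real p * x) * sin (real q * x))
       = (if p = q \<and> p \<noteq> 0 then pi else 0)"
proof -
  have product_to_sum: "sin (real p * x) * sin (real q * x)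
      = cos (of_int (int p - int q) * x) / 2 - cos (of_int (int p + int q) * x) / 2" for x
    by (simp add: cos_diff cos_add field_simps)
  have "(LINT x:{0..2*pi}|lborel. sin (real p * x) * sin (real q * x))
      = (LINT x:{0..2*pi}|lborel. cos (of_int (int p - int q) * x)) / 2
        - (LINT x:{0..2*pi}|lborel. cos (of_int (int p + int q) * x)) / 2"
    unfolding product_to_sum
    by (subst set_integral_diff) (auto intro!: set_integrable_0_2pi_continuous continuous_intros)
  also have "\<dots> = (if p = q \<and> p \<noteq> 0 then pi else 0)"
    unfolding set_integral_0_2pi_cos_int by auto
  finally show ?thesis .
qed

lemma set_integral_0_2pi_sin_cos:
  fixes p q :: nat
  shows "(LINT x:{0..2*pi}|lborel. sin (real p * x) * cos (real q * x)) = 0"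
proof -
  have product_to_sum: "sin (real p * x) * cos (real q * x)
      = sin (of_int (int p + int q) * x) / 2 + sin (of_int (int p - int q) * x) / 2" for x
    by (simp add: sin_diff sin_add field_simps)
  have "(LINT x:{0..2*pi}|lborel. sin (real p * x) * cos (real q * x))
      = (LINT x:{0..2*pi}|lborel. sin (of_int (int p + int q) * x)) / 2
        + (LINT x:{0..2*pi}|lborel. sin (of_int (int p - int q) * x)) / 2"
    unfolding product_to_sum
    by (subst set_integral_add) (auto intro!: set_integrable_0_2pi_continuous continuous_intros)
  also have "\<dots> = 0"
    unfolding set_integral_0_2pi_sin_int by simp
  finally show ?thesis .
qed

text \<open>A parity-free description of \<open>trig_basis\<close>, which keeps the orthogonality proof to a
  case split on cosine versus sine.\<close>

definition trig_amp :: "nat \<Rightarrow> real" where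
  "trig_amp k = (if k = 0 then 1 / sqrt (2*pi) else 1 / sqrt pi)"

definition trig_freq :: "nat \<Rightarrow> nat" where
  "trig_freq k = (k + 1) div 2"

definition trig_is_cos :: "nat \<Rightarrow> bool" where
  "trig_is_cos k \<longleftrightarrow> k = 0 \<or> odd k"

lemma trig_basis_eq:
  "trig_basis k x = trig_amp k *
     (if trig_is_cos k then cos (real (trig_freq k) * x) else sin (real (trig_freq k) * x))"
  unfolding trig_basis_def trig_amp_def trig_freq_def trig_is_cos_def
  by (auto elim!: evenE)

lemma trig_freq_inj: "trig_is_cos j = trig_is_cos k \<Longrightarrow> trig_freq j = trig_freq k \<Longrightarrow> j = k"
  unfolding trig_freq_def trig_is_cos_def by (auto elim!: evenE oddE)

lemma trig_freq_eq_0_iff: "trig_freq k = 0 \<longleftrightarrow> k = 0"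
  unfolding trig_freq_def by auto

lemma trig_freq_sin_nonzero: "\<not> trig_is_cos k \<Longrightarrow> trig_freq k \<noteq> 0"
  unfolding trig_freq_def trig_is_cos_def by (auto elim!: evenE oddE)

lemma trig_amp_normalizes: "(trig_amp k)\<^sup>2 * (if k = 0 then 2*pi else pi) = 1"
  unfolding trig_amp_def by (auto simp: power_divide)

lemma trig_basis_orthonormal:
  "(LINT x:circ|lborel. trig_basis j x * trig_basis k x) = (if j = k then 1 else 0)"
proof -
  let ?w = "\<lambda>k x. if trig_is_cos k then cos (real (trig_freq k) * x) else sin (real (trig_freq k) * x)"
  have "(LINT x:circ|lborel. trig_basis j x * trig_basis k x)
      = (trig_amp j * trig_amp k) * (LINT x:{0..2*pi}|lborel. ?w j x * ?w k x)"
    unfolding set_integral_circ_Icc trig_basis_eq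
    by (subst set_integral_mult_right[symmetric]) (simp add: algebra_simps)
  also have "\<dots> = (if j = k then 1 else 0)"
  proof (cases "j = k")
    case True
    have "k = 0 \<Longrightarrow> trig_is_cos k" by (simp add: trig_is_cos_def)
    then show ?thesis
      using trig_amp_normalizes[of k] trig_freq_sin_nonzero[of k] trig_freq_eq_0_iff[of k] True
      by (cases "trig_is_cos k")
         (auto simp: set_integral_0_2pi_cos_cos set_integral_0_2pi_sin_sin power2_eq_square)
  next
    case False
    have "(LINT x:{0..2*pi}|lborel. cos (real p * x) * sin (real q * x)) = 0" for p q
      using set_integral_0_2pi_sin_cos[of q p] by (simp add: mult.commute)
    then show ?thesis
      using trig_freq_inj[of j k] False
      by (cases "trig_is_cos j"; cases "trig_is_cos k")
         (auto simp: set_integral_0_2pi_cos_cos set_integral_0_2pi_sin_sin set_integral_0_2pi_sin_cos)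
  qed
  finally show ?thesis .
qed

definition circ_measure :: "real measure" where
  "circ_measure = restrict_space lborel circ"

lemma sets_circ [measurable]: "circ \<in> sets borel"
  unfolding circ_def by simp

lemma measurable_circ_measure: "f \<in> borel_measurable borel \<Longrightarrow> f \<in> borel_measurable circ_measure"
  unfolding circ_measure_def by (simp add: measurable_restrict_space1)

lemma finite_measure_circ_measure: "finite_measure circ_measure"
proof -
  have "emeasure lborel circ = ennreal (2*pi)" unfolding circ_def by simp
  then show ?thesis unfolding circ_measure_def
    by (intro finite_measureI) (simp add: space_restrict_space emeasure_restrict_space)
qed

interpretation circ_measure: finite_measure circ_measure
  by (rule finite_measure_circ_measure)

lemma set_integral_circ_measure:
  "(LINT x:circ|lborel. g x) = integral\<^sup>L circ_measure (g :: real \<Rightarrow> real)"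
  unfolding circ_measure_def set_lebesgue_integral_def
  by (subst integral_restrict_space) auto

lemma coeff_eq_integral_circ_measure:
  "coeff g j = integral\<^sup>L circ_measure (\<lambda>x. g x * trig_basis j x)"
  unfolding coeff_def by (rule set_integral_circ_measure)

lemma set_nn_integral_circ_measure:
  "(\<integral>\<^sup>+x\<in>circ. g x \<partial>lborel) = (\<integral>\<^sup>+x. g x \<partial>circ_measure)"
  unfolding circ_measure_def by (subst nn_integral_restrict_space) auto

lemma integrable_circ_measure_bounded:
  fixes f :: "real \<Rightarrow> real"
  assumes "f \<in> borel_measurable borel" "\<And>x. \<bar>f x\<bar> \<le> B"
  shows "integrable circ_measure f"
  by (rule circ_measure.integrable_const_bound[where B=B])
     (use assms in \<open>auto intro: measurable_circ_measure\<close>)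

lemma trig_basis_measurable [measurable]: "trig_basis k \<in> borel_measurable borel"
  unfolding trig_basis_def by measurable

lemma abs_trig_basis_le: "\<bar>trig_basis k x\<bar> \<le> 1 / sqrt pi"
proof -
  have amp: "0 \<le> trig_amp k" "trig_amp k \<le> 1 / sqrt pi"
    unfolding trig_amp_def by (auto simp: frac_le)
  have "\<bar>trig_basis k x\<bar> \<le> trig_amp k * 1"
    unfolding trig_basis_eq abs_mult using amp by (intro mult_mono) auto
  then show ?thesis using amp by simp
qed

lemma abs_trig_basis_le_1: "\<bar>trig_basis k x\<bar> \<le> 1"
proof -
  have "1 \<le> sqrt pi" using pi_gt3 by (simp add: real_le_rsqrt)
  then show ?thesis using abs_trig_basis_le[of k x] by (simp add: order_trans)
qed

lemma integrable_trig_basis_mult [simp]: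
  "integrable circ_measure (\<lambda>x. trig_basis j x * trig_basis k x)"
proof (rule integrable_circ_measure_bounded)
  show "\<bar>trig_basis j x * trig_basis k x\<bar> \<le> 1 * 1" for x
    unfolding abs_mult by (intro mult_mono abs_trig_basis_le_1) auto
qed auto

lemma integral_trig_basis_mult:
  "integral\<^sup>L circ_measure (\<lambda>x. trig_basis j x * trig_basis k x) = (if j = k then 1 else 0)"
  using trig_basis_orthonormal[of j k] unfolding set_integral_circ_measure .

lemma integral_trig_sum_mult_trig_basis:
  assumes "finite F"
  shows "integral\<^sup>L circ_measure (\<lambda>x. (\<Sum>l\<in>F. c l * trig_basis l x) * trig_basis k x)
       = (if k \<in> F then c k else 0)"
proof -
  have "integral\<^sup>L circ_measure (\<lambda>x. (\<Sum>l\<in>F. c l * trig_basis l x) * trig_basis k x)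
      = integral\<^sup>L circ_measure (\<lambda>x. \<Sum>l\<in>F. c l * (trig_basis l x * trig_basis k x))"
    by (simp add: sum_distrib_right mult.assoc)
  also have "\<dots> = (\<Sum>l\<in>F. c l * (if l = k then 1 else 0))"
    by (simp add: integral_trig_basis_mult)
  also have "\<dots> = (if k \<in> F then c k else 0)"
    using assms by (simp add: if_distrib sum.delta cong: if_cong)
  finally show ?thesis .
qed

lemma coeff_trig_sum:
  "finite F \<Longrightarrow> coeff (\<lambda>x. \<Sum>l\<in>F. c l * trig_basis l x) k = (if k \<in> F then c k else 0)"
  unfolding coeff_eq_integral_circ_measure by (rule integral_trig_sum_mult_trig_basis)

lemma integrable_trig_sum_mult_trig_basis:
  "integrable circ_measure (\<lambda>x. (\<Sum>l\<in>F. c l * trig_basis l x) * trig_basis k x)"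
  unfolding sum_distrib_right mult.assoc by (intro Bochner_Integration.integrable_sum) simp

section \<open>Bessel's inequality\<close>

lemma integrable_mult_trig_basis:
  fixes h :: "real \<Rightarrow> real"
  assumes h [measurable]: "h \<in> borel_measurable circ_measure"
    and sq: "integrable circ_measure (\<lambda>x. (h x)\<^sup>2)"
  shows "integrable circ_measure (\<lambda>x. h x * trig_basis k x)"
proof (rule Bochner_Integration.integrable_bound)
  show "integrable circ_measure (\<lambda>x. (h x)\<^sup>2 + 1)" using sq by simp
  show "(\<lambda>x. h x * trig_basis k x) \<in> borel_measurable circ_measure"
    using measurable_circ_measure[OF trig_basis_measurable] by measurable
  have "norm (h x * trig_basis k x) \<le> norm ((h x)\<^sup>2 + 1)" for x
  proof -
    have "\<bar>h x * trig_basis k x\<bar> \<le> \<bar>h x\<bar> * 1"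
      unfolding abs_mult by (intro mult_left_mono abs_trig_basis_le_1) auto
    also have "\<dots> \<le> (h x)\<^sup>2 + 1"
      using zero_le_square[of "\<bar>h x\<bar> - 1"] by (simp add: power2_eq_square algebra_simps)
    finally show ?thesis by simp
  qed
  then show "AE x in circ_measure. norm (h x * trig_basis k x) \<le> norm ((h x)\<^sup>2 + 1)"
    by simp
qed

lemma bessel_inequality_integrable:
  fixes h :: "real \<Rightarrow> real"
  assumes h [measurable]: "h \<in> borel_measurable circ_measure"
    and sq: "integrable circ_measure (\<lambda>x. (h x)\<^sup>2)" and F: "finite F"
  shows "(\<Sum>k\<in>F. (integral\<^sup>L circ_measure (\<lambda>x. h x * trig_basis k x))\<^sup>2)
       \<le> integral\<^sup>L circ_measure (\<lambda>x. (h x)\<^sup>2)"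
proof -
  define b where "b k = integral\<^sup>L circ_measure (\<lambda>x. h x * trig_basis k x)" for k
  define t where "t x = (\<Sum>k\<in>F. b k * trig_basis k x)" for x
  have h_phi: "integrable circ_measure (\<lambda>x. h x * trig_basis k x)" for k
    by (rule integrable_mult_trig_basis[OF h sq])
  have h_t: "integrable circ_measure (\<lambda>x. 2 * (h x * t x))"
    unfolding t_def sum_distrib_left
    by (intro integrable_mult_right Bochner_Integration.integrable_sum) (simp add: ac_simps h_phi)
  have t_t_eq: "t x * t x = (\<Sum>k\<in>F. b k * (t x * trig_basis k x))" for x
    unfolding t_def by (simp add: sum_distrib_left sum_distrib_right ac_simps)
  have t_phi: "integrable circ_measure (\<lambda>x. t x * trig_basis k x)" for k
    unfolding t_def by (rule integrable_trig_sum_mult_trig_basis)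
  have t_t: "integrable circ_measure (\<lambda>x. t x * t x)"
    unfolding t_t_eq by (intro Bochner_Integration.integrable_sum integrable_mult_right t_phi)
  have int_h_t: "integral\<^sup>L circ_measure (\<lambda>x. h x * t x) = (\<Sum>k\<in>F. (b k)\<^sup>2)"
    unfolding t_def sum_distrib_left
    by (subst Bochner_Integration.integral_sum)
       (auto simp: ac_simps h_phi b_def[symmetric] power2_eq_square)
  have int_t_t: "integral\<^sup>L circ_measure (\<lambda>x. t x * t x) = (\<Sum>k\<in>F. (b k)\<^sup>2)"
    unfolding t_t_eq
    by (subst Bochner_Integration.integral_sum)
       (auto simp: t_phi[unfolded t_def] t_def integral_trig_sum_mult_trig_basis[OF F] power2_eq_square)
  have "0 \<le> integral\<^sup>L circ_measure (\<lambda>x. (h x - t x)\<^sup>2)"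
    by (rule integral_nonneg_AE) simp
  also have "\<dots> = integral\<^sup>L circ_measure (\<lambda>x. (h x)\<^sup>2 - 2 * (h x * t x) + t x * t x)"
    by (rule Bochner_Integration.integral_cong) (auto simp: power2_eq_square algebra_simps)
  also have "\<dots> = integral\<^sup>L circ_measure (\<lambda>x. (h x)\<^sup>2) - 2 * (\<Sum>k\<in>F. (b k)\<^sup>2) + (\<Sum>k\<in>F. (b k)\<^sup>2)"
    using sq h_t t_t by (simp add: int_h_t int_t_t)
  finally show ?thesis unfolding b_def by simp
qed

lemma bessel_inequality:
  fixes g :: "real \<Rightarrow> real"
  assumes g [measurable]: "g \<in> borel_measurable borel" and F: "finite F"
  shows "ennreal (\<Sum>k\<in>F. (coeff g k - a k)\<^sup>2)
       \<le> (\<integral>\<^sup>+x\<in>circ. ennreal ((g x - (\<Sum>l\<in>F. a l * trig_basis l x))\<^sup>2) \<partial>lborel)"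
proof -
  define h where "h x = g x - (\<Sum>l\<in>F. a l * trig_basis l x)" for x
  have h [measurable]: "h \<in> borel_measurable circ_measure"
    unfolding h_def by (intro measurable_circ_measure) measurable
  show ?thesis
  proof (cases "(\<integral>\<^sup>+x. ennreal ((h x)\<^sup>2) \<partial>circ_measure) = \<infinity>")
    case True
    then show ?thesis unfolding set_nn_integral_circ_measure h_def by simp
  next
    case False
    then obtain r where r: "(\<integral>\<^sup>+x. ennreal ((h x)\<^sup>2) \<partial>circ_measure) = ennreal r"
      by (cases "\<integral>\<^sup>+x. ennreal ((h x)\<^sup>2) \<partial>circ_measure") auto
    have sq: "integrable circ_measure (\<lambda>x. (h x)\<^sup>2)"
      by (rule integrableI_nn_integral_finite[OF _ _ r]) auto
    have g_phi: "integrable circ_measure (\<lambda>x. g x * trig_basis k x)" for k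
    proof -
      have "integrable circ_measure
          (\<lambda>x. h x * trig_basis k x + (\<Sum>l\<in>F. a l * trig_basis l x) * trig_basis k x)"
        using integrable_mult_trig_basis[OF h sq] integrable_trig_sum_mult_trig_basis
        by (rule Bochner_Integration.integrable_add)
      then show ?thesis unfolding h_def left_diff_distrib by simp
    qed
    have "coeff g k - a k = integral\<^sup>L circ_measure (\<lambda>x. h x * trig_basis k x)" if "k \<in> F" for k
    proof -
      have "integral\<^sup>L circ_measure (\<lambda>x. h x * trig_basis k x)
          = coeff g k - integral\<^sup>L circ_measure (\<lambda>x. (\<Sum>l\<in>F. a l * trig_basis l x) * trig_basis k x)"
        unfolding coeff_eq_integral_circ_measure h_def left_diff_distrib
        by (rule Bochner_Integration.integral_diff[OF g_phi integrable_trig_sum_mult_trig_basis])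
      then show ?thesis using integral_trig_sum_mult_trig_basis[OF F, of a k] that by simp
    qed
    then have "(\<Sum>k\<in>F. (coeff g k - a k)\<^sup>2)
        = (\<Sum>k\<in>F. (integral\<^sup>L circ_measure (\<lambda>x. h x * trig_basis k x))\<^sup>2)"
      by (intro sum.cong) auto
    also have "\<dots> \<le> integral\<^sup>L circ_measure (\<lambda>x. (h x)\<^sup>2)"
      by (rule bessel_inequality_integrable[OF h sq F])
    finally have "ennreal (\<Sum>k\<in>F. (coeff g k - a k)\<^sup>2) \<le> (\<integral>\<^sup>+x. ennreal ((h x)\<^sup>2) \<partial>circ_measure)"
      by (simp add: nn_integral_eq_integral[OF sq] ennreal_leI)
    then show ?thesis unfolding set_nn_integral_circ_measure h_def .
  qed
qed

section \<open>The hypercube of densities\<close>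

definition vertex_sign :: "nat set \<Rightarrow> nat \<Rightarrow> real" where
  "vertex_sign S k = (if k \<in> S then 1 else -1)"

definition flip :: "nat set \<Rightarrow> nat \<Rightarrow> nat set" where
  "flip S k = (if k \<in> S then S - {k} else insert k S)"

lemma flip_flip [simp]: "flip (flip S k) k = S"
  unfolding flip_def by auto

lemma flip_in_Pow: "k \<in> K \<Longrightarrow> S \<in> Pow K \<Longrightarrow> flip S k \<in> Pow K"
  unfolding flip_def by auto

lemma vertex_sign_cases: "vertex_sign S k = 1 \<or> vertex_sign S k = -1"
  unfolding vertex_sign_def by auto

lemma vertex_sign_flip: "vertex_sign (flip S k) k = - vertex_sign S k"
  unfolding flip_def vertex_sign_def by auto

lemma vertex_sign_flip_other: "j \<noteq> k \<Longrightarrow> vertex_sign (flip S k) j = vertex_sign S j"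
  unfolding flip_def vertex_sign_def by auto

definition cube_coeff :: "real \<Rightarrow> nat set \<Rightarrow> nat \<Rightarrow> real" where
  "cube_coeff \<gamma> S k = (if k = 0 then 1 / sqrt (2*pi) else \<gamma> * vertex_sign S k)"

definition cube_density :: "real \<Rightarrow> nat \<Rightarrow> nat set \<Rightarrow> real \<Rightarrow> real" where
  "cube_density \<gamma> m S x = (\<Sum>k\<in>{..m}. cube_coeff \<gamma> S k * trig_basis k x)"

definition cube_admissible :: "real \<Rightarrow> nat \<Rightarrow> bool" where
  "cube_admissible \<gamma> m \<longleftrightarrow> 0 \<le> \<gamma> \<and> 2 * pi * \<gamma> * real m / sqrt pi \<le> 1/2"

text \<open>The likelihood ratio of \<open>cube_density \<gamma> m S\<close> with respect to the uniform density \<open>1/(2\<pi>)\<close>.\<close>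

definition cube_ratio :: "real \<Rightarrow> nat \<Rightarrow> nat set \<Rightarrow> real \<Rightarrow> real" where
  "cube_ratio \<gamma> m S x = 2 * pi * cube_density \<gamma> m S x"

lemma cube_density_measurable [measurable]: "cube_density \<gamma> m S \<in> borel_measurable borel"
  unfolding cube_density_def by measurable

lemma cube_ratio_measurable [measurable]: "cube_ratio \<gamma> m S \<in> borel_measurable borel"
  unfolding cube_ratio_def[abs_def] by measurable

lemma cube_density_eq:
  "cube_density \<gamma> m S x = 1 / (2*pi) + \<gamma> * (\<Sum>k\<in>{1..m}. vertex_sign S k * trig_basis k x)"
proof -
  have "{..m} = insert 0 {1..m}" by auto
  then have "cube_density \<gamma> m S x
      = cube_coeff \<gamma> S 0 * trig_basis 0 x + (\<Sum>k\<in>{1..m}. cube_coeff \<gamma> S k * trig_basis k x)"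
    unfolding cube_density_def by simp
  also have "cube_coeff \<gamma> S 0 * trig_basis 0 x = 1 / (2*pi)"
    unfolding cube_coeff_def trig_basis_def by (simp add: real_sqrt_mult[symmetric])
  also have "(\<Sum>k\<in>{1..m}. cube_coeff \<gamma> S k * trig_basis k x)
      = \<gamma> * (\<Sum>k\<in>{1..m}. vertex_sign S k * trig_basis k x)"
    unfolding cube_coeff_def by (simp add: sum_distrib_left ac_simps)
  finally show ?thesis .
qed

lemma abs_vertex_sign_sum_le:
  "\<bar>\<Sum>k\<in>{1..m}. vertex_sign S k * trig_basis k x\<bar> \<le> real m / sqrt pi"
proof -
  have "\<bar>\<Sum>k\<in>{1..m}. vertex_sign S k * trig_basis k x\<bar>
      \<le> (\<Sum>k\<in>{1..m}. \<bar>vertex_sign S k * trig_basis k x\<bar>)"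
    by (rule sum_abs)
  also have "\<dots> \<le> (\<Sum>k\<in>{1..m}. 1 / sqrt pi)"
    by (intro sum_mono) (simp add: abs_mult vertex_sign_def abs_trig_basis_le)
  finally show ?thesis by simp
qed

lemma cube_ratio_bounds:
  assumes "cube_admissible \<gamma> m"
  shows "1/2 \<le> cube_ratio \<gamma> m S x" "cube_ratio \<gamma> m S x \<le> 3/2"
proof -
  let ?p = "\<Sum>k\<in>{1..m}. vertex_sign S k * trig_basis k x"
  have "\<bar>2 * pi * \<gamma> * ?p\<bar> = 2 * pi * \<gamma> * \<bar>?p\<bar>"
    using assms unfolding cube_admissible_def by (simp add: abs_mult)
  also have "\<dots> \<le> 2 * pi * \<gamma> * (real m / sqrt pi)"
    using assms unfolding cube_admissible_def by (intro mult_left_mono abs_vertex_sign_sum_le) auto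
  also have "\<dots> \<le> 1/2" using assms unfolding cube_admissible_def by simp
  finally have "\<bar>2 * pi * \<gamma> * ?p\<bar> \<le> 1/2" .
  moreover have "cube_ratio \<gamma> m S x = 1 + 2 * pi * \<gamma> * ?p"
    unfolding cube_ratio_def cube_density_eq by (simp add: algebra_simps)
  ultimately show "1/2 \<le> cube_ratio \<gamma> m S x" "cube_ratio \<gamma> m S x \<le> 3/2"
    by (auto simp: abs_le_iff)
qed

lemma cube_density_nonneg:
  assumes "cube_admissible \<gamma> m"
  shows "0 \<le> cube_density \<gamma> m S x"
proof -
  have "0 \<le> 2 * pi * cube_density \<gamma> m S x"
    using cube_ratio_bounds(1)[OF assms, of S x] by (simp add: cube_ratio_def)
  then show ?thesis using pi_gt_zero by (simp add: zero_le_mult_iff)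
qed

lemma abs_cube_density_le_1:
  assumes "cube_admissible \<gamma> m"
  shows "\<bar>cube_density \<gamma> m S x\<bar> \<le> 1"
proof -
  have nonneg: "0 \<le> cube_density \<gamma> m S x" by (rule cube_density_nonneg[OF assms])
  then have "2 * cube_density \<gamma> m S x \<le> 2 * pi * cube_density \<gamma> m S x"
    using pi_gt3 by (intro mult_right_mono) auto
  also have "\<dots> \<le> 3/2" using cube_ratio_bounds(2)[OF assms, of S x] by (simp add: cube_ratio_def)
  finally show ?thesis using nonneg by simp
qed

lemma coeff_cube_density: "coeff (cube_density \<gamma> m S) j = (if j \<le> m then cube_coeff \<gamma> S j else 0)"
  unfolding cube_density_def[abs_def] by (subst coeff_trig_sum) auto

lemma integral_cube_density: "integral\<^sup>L circ_measure (cube_density \<gamma> m S) = 1"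
proof -
  have "integral\<^sup>L circ_measure (cube_density \<gamma> m S)
      = sqrt (2*pi) * integral\<^sup>L circ_measure (\<lambda>x. cube_density \<gamma> m S x * trig_basis 0 x)"
    by (simp add: trig_basis_def)
  also have "integral\<^sup>L circ_measure (\<lambda>x. cube_density \<gamma> m S x * trig_basis 0 x) = cube_coeff \<gamma> S 0"
    using coeff_cube_density[of \<gamma> m S 0] unfolding coeff_eq_integral_circ_measure by simp
  finally show ?thesis by (simp add: cube_coeff_def)
qed

lemma integrable_cube_density: "cube_admissible \<gamma> m \<Longrightarrow> integrable circ_measure (cube_density \<gamma> m S)"
  by (rule integrable_circ_measure_bounded[OF cube_density_measurable abs_cube_density_le_1])

lemma integrable_cube_ratio: "cube_admissible \<gamma> m \<Longrightarrow> integrable circ_measure (cube_ratio \<gamma> m S)"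
  unfolding cube_ratio_def[abs_def] using integrable_cube_density by simp

lemma integral_cube_ratio: "integral\<^sup>L circ_measure (cube_ratio \<gamma> m S) = 2 * pi"
  unfolding cube_ratio_def[abs_def] using integral_cube_density by simp

lemma cube_density_is_density:
  assumes "cube_admissible \<gamma> m"
  shows "is_density (cube_density \<gamma> m S)"
proof -
  have "(\<integral>\<^sup>+x\<in>circ. ennreal (cube_density \<gamma> m S x) \<partial>lborel)
      = ennreal (integral\<^sup>L circ_measure (cube_density \<gamma> m S))"
    unfolding set_nn_integral_circ_measure
    by (rule nn_integral_eq_integral[OF integrable_cube_density[OF assms]])
       (simp add: cube_density_nonneg[OF assms])
  then show ?thesis
    unfolding is_density_def integral_cube_density using cube_density_nonneg[OF assms] by simp
qed

lemma sob_weight_le: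
  assumes "\<beta> > 0" "1 \<le> j" "j \<le> m"
  shows "(sob_weight \<beta> j)\<^sup>2 \<le> ((real m + 1) powr \<beta>)\<^sup>2"
proof -
  have "sob_weight \<beta> j \<le> (real m + 1) powr \<beta>"
    unfolding sob_weight_def using assms by (auto intro!: powr_mono2)
  then show ?thesis by (intro power_mono) (auto simp: sob_weight_def)
qed

lemma cube_density_sobolev:
  assumes adm: "cube_admissible \<gamma> m" and \<beta>: "\<beta> > 0"
    and small: "real m * ((real m + 1) powr \<beta>)\<^sup>2 * \<gamma>\<^sup>2 < R\<^sup>2 / pi powr (2*\<beta>)"
  shows "cube_density \<gamma> m S \<in> sobolev \<beta> R"
proof -
  have "integrable circ_measure (\<lambda>x. (cube_density \<gamma> m S x)\<^sup>2)"
    by (rule integrable_circ_measure_bounded[where B=1])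
       (use abs_cube_density_le_1[OF adm] in \<open>auto simp: abs_square_le_1\<close>)
  then have square_integrable: "set_integrable lborel circ (\<lambda>x. (cube_density \<gamma> m S x)\<^sup>2)"
    unfolding circ_measure_def by (subst set_integrable_eq) auto
  define t where "t j = (sob_weight \<beta> j)\<^sup>2 * (coeff (cube_density \<gamma> m S) j)\<^sup>2" for j
  have t_nonneg: "0 \<le> t j" for j unfolding t_def by simp
  have "{..m} = insert 0 {1..m}" by auto
  then have "(\<Sum>j\<le>m. t j) = (\<Sum>j\<in>{1..m}. t j)"
    by (simp add: t_def sob_weight_def)
  also have "\<dots> \<le> (\<Sum>j\<in>{1..m}. ((real m + 1) powr \<beta>)\<^sup>2 * \<gamma>\<^sup>2)"
  proof (rule sum_mono)
    fix j assume j: "j \<in> {1..m}"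
    then have "(coeff (cube_density \<gamma> m S) j)\<^sup>2 = \<gamma>\<^sup>2"
      by (simp add: coeff_cube_density cube_coeff_def power_mult_distrib vertex_sign_def)
    then show "t j \<le> ((real m + 1) powr \<beta>)\<^sup>2 * \<gamma>\<^sup>2"
      unfolding t_def using sob_weight_le[OF \<beta>, of j m] j by (auto intro: mult_right_mono)
  qed
  also have "\<dots> < R\<^sup>2 / pi powr (2*\<beta>)" using small by simp
  finally have sum_less: "(\<Sum>j\<le>m. t j) < R\<^sup>2 / pi powr (2*\<beta>)" .
  have "(\<Sum>j. ennreal (t j)) = (\<Sum>j\<le>m. ennreal (t j))"
    by (rule suminf_finite) (auto simp: t_def coeff_cube_density)
  also have "\<dots> < ennreal (R\<^sup>2 / pi powr (2*\<beta>))"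
    using sum_less sum_nonneg[of "{..m}" t] t_nonneg
    by (subst sum_ennreal) (auto intro!: ennreal_lessI)
  finally show ?thesis
    unfolding sobolev_def t_def using square_integrable by simp
qed

lemma cube_ratio_flip_diff_sq:
  assumes k: "k \<in> {1..m}"
  shows "(cube_ratio \<gamma> m S x - cube_ratio \<gamma> m (flip S k) x)\<^sup>2 = 16 * pi\<^sup>2 * \<gamma>\<^sup>2 * (trig_basis k x)\<^sup>2"
proof -
  have "(\<Sum>j\<in>{1..m}. vertex_sign S j * trig_basis j x)
        - (\<Sum>j\<in>{1..m}. vertex_sign (flip S k) j * trig_basis j x)
      = (\<Sum>j\<in>{1..m}. (vertex_sign S j - vertex_sign (flip S k) j) * trig_basis j x)"
    by (simp add: sum_subtractf[symmetric] algebra_simps)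
  also have "\<dots> = (\<Sum>j\<in>{1..m}. if j = k then 2 * vertex_sign S k * trig_basis k x else 0)"
    by (rule sum.cong) (auto simp: vertex_sign_flip vertex_sign_flip_other)
  also have "\<dots> = 2 * vertex_sign S k * trig_basis k x"
    using k by simp
  finally have "cube_ratio \<gamma> m S x - cube_ratio \<gamma> m (flip S k) x = 4 * pi * \<gamma> * vertex_sign S k * trig_basis k x"
    unfolding cube_ratio_def cube_density_eq by (simp add: algebra_simps)
  then show ?thesis
    using vertex_sign_cases[of S k] by (auto simp: power_mult_distrib)
qed

section \<open>Hellinger affinity of neighbouring vertices\<close>

lemma sqrt_mult_le_min:
  fixes a b :: real
  assumes "0 \<le> a" "0 \<le> b"
  shows "sqrt (a * b) \<le> 2 * min a b + (a + b) / 8"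
proof -
  have am_gm: "sqrt (x * y) \<le> 2 * x + y / 8" if "0 \<le> x" "0 \<le> y" for x y :: real
  proof -
    have "sqrt (x * y) = sqrt ((4 * x) * (y / 4))" by simp
    also have "\<dots> \<le> (4 * x + y / 4) / 2" by (rule arith_geo_mean_sqrt) (use that in auto)
    finally show ?thesis by simp
  qed
  show ?thesis
  proof (cases "a \<le> b")
    case True
    then have "2 * a + b / 8 \<le> 2 * min a b + (a + b) / 8" using assms by simp
    then show ?thesis using am_gm[OF assms] by (rule order_trans[rotated])
  next
    case False
    then have "2 * b + a / 8 \<le> 2 * min a b + (a + b) / 8" using assms by simp
    then show ?thesis using am_gm[OF assms(2,1)] by (simp add: mult.commute)
  qed
qed

lemma sqrt_square_diff_ge:
  fixes A v :: real
  assumes "0 < A" "v\<^sup>2 \<le> A\<^sup>2"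
  shows "A - v\<^sup>2 / A \<le> sqrt (A\<^sup>2 - v\<^sup>2)"
proof (cases "A - v\<^sup>2 / A \<le> 0")
  case True
  then show ?thesis using assms(2) by (smt (verit) real_sqrt_ge_zero)
next
  case False
  have "(A - v\<^sup>2 / A)\<^sup>2 = A\<^sup>2 - 2 * v\<^sup>2 + v\<^sup>2 * (v\<^sup>2 / A\<^sup>2)"
    using assms by (simp add: power2_eq_square field_simps)
  also have "v\<^sup>2 * (v\<^sup>2 / A\<^sup>2) \<le> v\<^sup>2 * 1"
    using assms by (intro mult_left_mono) auto
  finally show ?thesis by (intro real_le_rsqrt) simp
qed

lemma sqrt_mult_ge_mean_minus_sq_diff:
  fixes r r' :: real
  assumes r: "1/2 \<le> r" and r': "1/2 \<le> r'"
  shows "(r + r') / 2 - (r - r')\<^sup>2 / 2 \<le> sqrt (r * r')"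
proof -
  define A where "A = (r + r') / 2"
  define v where "v = (r - r') / 2"
  have A: "1/2 \<le> A" unfolding A_def using r r' by simp
  have rr': "r * r' = A\<^sup>2 - v\<^sup>2" unfolding A_def v_def by (simp add: power2_eq_square field_simps)
  have vA: "v\<^sup>2 \<le> A\<^sup>2"
    unfolding A_def v_def using r r' unfolding abs_le_square_iff[symmetric] by (simp add: abs_le_iff)
  have "v\<^sup>2 * 1 \<le> v\<^sup>2 * (2 * A)" using A by (intro mult_left_mono) auto
  then have "v\<^sup>2 / A \<le> 2 * v\<^sup>2" using A by (simp add: divide_le_eq algebra_simps)
  then have "A - 2 * v\<^sup>2 \<le> A - v\<^sup>2 / A" by simp
  also have "\<dots> \<le> sqrt (A\<^sup>2 - v\<^sup>2)" using A vA by (intro sqrt_square_diff_ge) auto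
  finally show ?thesis
    unfolding rr'[symmetric] unfolding A_def v_def by (simp add: power2_eq_square field_simps)
qed

lemma integrable_sqrt_cube_ratio_mult:
  assumes adm: "cube_admissible \<gamma> m"
  shows "integrable circ_measure (\<lambda>x. sqrt (cube_ratio \<gamma> m S x * cube_ratio \<gamma> m S' x))"
proof (rule integrable_circ_measure_bounded[where B=2])
  fix x
  have "cube_ratio \<gamma> m S x * cube_ratio \<gamma> m S' x \<le> 2 * 2"
    using cube_ratio_bounds[OF adm, of S x] cube_ratio_bounds[OF adm, of S' x]
    by (intro mult_mono) auto
  then have "sqrt (cube_ratio \<gamma> m S x * cube_ratio \<gamma> m S' x) \<le> sqrt (2 * 2)"
    by (rule real_sqrt_le_mono)
  moreover have "0 \<le> cube_ratio \<gamma> m S x * cube_ratio \<gamma> m S' x"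
    using cube_ratio_bounds(1)[OF adm, of S x] cube_ratio_bounds(1)[OF adm, of S' x] by simp
  ultimately show "\<bar>sqrt (cube_ratio \<gamma> m S x * cube_ratio \<gamma> m S' x)\<bar> \<le> 2"
    by simp
qed simp

lemma integral_sqrt_cube_ratio_flip:
  assumes adm: "cube_admissible \<gamma> m" and k: "k \<in> {1..m}"
  shows "2 * pi * (1 - 4 * pi * \<gamma>\<^sup>2)
       \<le> integral\<^sup>L circ_measure (\<lambda>x. sqrt (cube_ratio \<gamma> m S x * cube_ratio \<gamma> m (flip S k) x))"
proof -
  let ?r = "cube_ratio \<gamma> m S" and ?r' = "cube_ratio \<gamma> m (flip S k)"
  define L where "L x = ?r x / 2 + ?r' x / 2 - 8 * pi\<^sup>2 * \<gamma>\<^sup>2 * (trig_basis k x * trig_basis k x)" for x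
  have L_le: "L x \<le> sqrt (?r x * ?r' x)" for x
  proof -
    have "(?r x + ?r' x) / 2 - (?r x - ?r' x)\<^sup>2 / 2 \<le> sqrt (?r x * ?r' x)"
      using cube_ratio_bounds(1)[OF adm, of S x] cube_ratio_bounds(1)[OF adm, of "flip S k" x]
      by (rule sqrt_mult_ge_mean_minus_sq_diff)
    then show ?thesis unfolding L_def cube_ratio_flip_diff_sq[OF k] by (simp add: power2_eq_square field_simps)
  qed
  have "integral\<^sup>L circ_measure L
      = integral\<^sup>L circ_measure ?r / 2 + integral\<^sup>L circ_measure ?r' / 2
        - 8 * pi\<^sup>2 * \<gamma>\<^sup>2 * integral\<^sup>L circ_measure (\<lambda>x. trig_basis k x * trig_basis k x)"
    unfolding L_def using integrable_cube_ratio[OF adm] by simp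
  also have "\<dots> = 2 * pi * (1 - 4 * pi * \<gamma>\<^sup>2)"
    by (simp add: integral_cube_ratio integral_trig_basis_mult power2_eq_square algebra_simps)
  finally have "integral\<^sup>L circ_measure L = 2 * pi * (1 - 4 * pi * \<gamma>\<^sup>2)" .
  moreover have "integral\<^sup>L circ_measure L \<le> integral\<^sup>L circ_measure (\<lambda>x. sqrt (?r x * ?r' x))"
    by (rule integral_mono[OF _ integrable_sqrt_cube_ratio_mult[OF adm] L_le])
       (use integrable_cube_ratio[OF adm] in \<open>simp add: L_def\<close>)
  ultimately show ?thesis by simp
qed

lemma nn_integral_min_ge_of_affinity:
  fixes d1 d2 :: "'a \<Rightarrow> real"
  assumes [measurable]: "d1 \<in> borel_measurable M" "d2 \<in> borel_measurable M"
    and nonneg: "\<And>x. 0 \<le> d1 x" "\<And>x. 0 \<le> d2 x"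
    and total: "(\<integral>\<^sup>+x. ennreal (d1 x) \<partial>M) = 1" "(\<integral>\<^sup>+x. ennreal (d2 x) \<partial>M) = 1"
    and affinity: "ennreal (3/4) \<le> (\<integral>\<^sup>+x. ennreal (sqrt (d1 x * d2 x)) \<partial>M)"
  shows "ennreal (1/4) \<le> (\<integral>\<^sup>+x. min (ennreal (d1 x)) (ennreal (d2 x)) \<partial>M)"
proof -
  have d1: "integrable M d1" "integral\<^sup>L M d1 = 1"
    using total(1) nonneg(1) by (auto intro: integrableI_nn_integral_finite simp: integral_eq_nn_integral)
  have d2: "integrable M d2" "integral\<^sup>L M d2 = 1"
    using total(2) nonneg(2) by (auto intro: integrableI_nn_integral_finite simp: integral_eq_nn_integral)
  define bound where "bound x = 2 * min (d1 x) (d2 x) + (d1 x + d2 x) / 8" for x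
  have min_int: "integrable M (\<lambda>x. min (d1 x) (d2 x))"
    by (rule Bochner_Integration.integrable_bound[OF d1(1)]) (auto simp: nonneg)
  have bound_int: "integrable M bound" unfolding bound_def using min_int d1 d2 by simp
  have sqrt_int: "integrable M (\<lambda>x. sqrt (d1 x * d2 x))"
    by (rule Bochner_Integration.integrable_bound[OF bound_int])
       (auto simp: bound_def nonneg sqrt_mult_le_min)
  have "3/4 \<le> integral\<^sup>L M (\<lambda>x. sqrt (d1 x * d2 x))"
    using affinity nonneg by (simp add: nn_integral_eq_integral[OF sqrt_int])
  also have "\<dots> \<le> integral\<^sup>L M bound"
    by (rule integral_mono[OF sqrt_int bound_int]) (simp add: bound_def nonneg sqrt_mult_le_min)
  also have "\<dots> = 2 * integral\<^sup>L M (\<lambda>x. min (d1 x) (d2 x)) + 1/4"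
    unfolding bound_def using min_int d1 d2 by simp
  finally have "ennreal (1/4) \<le> ennreal (integral\<^sup>L M (\<lambda>x. min (d1 x) (d2 x)))"
    by (intro ennreal_leI) simp
  also have "\<dots> = (\<integral>\<^sup>+x. min (ennreal (d1 x)) (ennreal (d2 x)) \<partial>M)"
    using nonneg by (simp add: nn_integral_eq_integral[OF min_int] min_ennreal)
  finally show ?thesis .
qed

section \<open>The censored sample as an image of the full sample\<close>

definition censor :: "real \<times> real \<times> real \<Rightarrow> real \<times> real \<times> real" where
  "censor = (\<lambda>(x, l, u). (if x \<in> circ_interval l u then x else -pi, l, u))"

lemma obs_law_eq_distr_censor: "obs_law Q f = distr (X_law f \<Otimes>\<^sub>M Q) borel censor"
  unfolding obs_law_def censor_def ..

lemma censor_measurable: "censor \<in> borel_measurable borel"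
proof -
  let ?in = "\<lambda>z::real \<times> real \<times> real. 0 \<le> fst z \<and> fst z < 2*pi \<and>
    (if fst (snd z) \<le> snd (snd z) then fst (snd z) \<le> fst z \<and> fst z \<le> snd (snd z)
     else fst (snd z) \<le> fst z \<or> fst z \<le> snd (snd z))"
  have "(\<lambda>z. (if ?in z then fst z else -pi, fst (snd z), snd (snd z)))
      \<in> measurable (borel \<Otimes>\<^sub>M (borel \<Otimes>\<^sub>M borel)) (borel \<Otimes>\<^sub>M (borel \<Otimes>\<^sub>M borel))"
    by measurable
  moreover have "censor = (\<lambda>z. (if ?in z then fst z else -pi, fst (snd z), snd (snd z)))"
    unfolding censor_def circ_interval_def circ_def by (auto simp: fun_eq_iff split: prod.splits)
  ultimately show ?thesis by (simp add: borel_prod)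
qed

definition uniform_density :: "real \<Rightarrow> real" where
  "uniform_density x = 1 / (2*pi)"

text \<open>The law of the uncensored observation \<open>(X, L, U)\<close> for uniform \<open>X\<close>: the full sample at
  any density \<open>f\<close> has density \<open>\<Prod>\<^sub>i 2\<pi> f(X\<^sub>i)\<close> with respect to its \<open>n\<close>-fold power.\<close>

definition reference_law :: "(real \<times> real) measure \<Rightarrow> (real \<times> real \<times> real) measure" where
  "reference_law Q = X_law uniform_density \<Otimes>\<^sub>M Q"

abbreviation reference_sample :: "(real \<times> real) measure \<Rightarrow> nat \<Rightarrow> (nat \<Rightarrow> real \<times> real \<times> real) measure" where
  "reference_sample Q n \<equiv> PiM {..<n} (\<lambda>_. reference_law Q)"

abbreviation sample_space :: "nat \<Rightarrow> (nat \<Rightarrow> real \<times> real \<times> real) measure" where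
  "sample_space n \<equiv> PiM {..<n} (\<lambda>_. borel)"

abbreviation censor_sample :: "nat \<Rightarrow> (nat \<Rightarrow> real \<times> real \<times> real) \<Rightarrow> nat \<Rightarrow> real \<times> real \<times> real" where
  "censor_sample n \<equiv> compose {..<n} censor"

lemma sets_X_law [simp]: "sets (X_law f) = sets borel"
  unfolding X_law_def by simp

lemma prob_space_X_law: "is_density f \<Longrightarrow> prob_space (X_law f)"
proof (rule prob_spaceI)
  assume f: "is_density f"
  have "emeasure (X_law f) (space (X_law f)) = (\<integral>\<^sup>+x. ennreal (f x) * indicator circ x \<partial>lborel)"
    using f unfolding X_law_def is_density_def by (subst emeasure_density) auto
  also have "\<dots> = 1" using f unfolding is_density_def by simp
  finally show "emeasure (X_law f) (space (X_law f)) = 1" .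
qed

lemma is_density_uniform: "is_density uniform_density"
proof -
  have "(\<integral>\<^sup>+x\<in>circ. ennreal (uniform_density x) \<partial>lborel) = ennreal (1/(2*pi)) * emeasure lborel circ"
    unfolding uniform_density_def by (simp add: nn_integral_cmult_indicator)
  also have "\<dots> = ennreal (1/(2*pi)) * ennreal (2*pi)" unfolding circ_def by simp
  also have "\<dots> = 1" by (simp add: ennreal_mult''[symmetric])
  finally show ?thesis unfolding is_density_def uniform_density_def by simp
qed

lemma X_law_eq_density_uniform:
  assumes [measurable]: "f \<in> borel_measurable borel" and nonneg: "\<And>x. 0 \<le> f x"
  shows "X_law f = density (X_law uniform_density) (\<lambda>x. ennreal (2*pi * f x))"
proof -
  have "density (X_law uniform_density) (\<lambda>x. ennreal (2*pi * f x))
      = density lborel (\<lambda>x. ennreal (uniform_density x) * indicator circ x * ennreal (2*pi * f x))"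
    unfolding X_law_def by (subst density_density_eq) (auto simp: uniform_density_def)
  also have "(\<lambda>x. ennreal (uniform_density x) * indicator circ x * ennreal (2*pi * f x))
      = (\<lambda>x. ennreal (f x) * indicator circ x)"
    by (auto simp: fun_eq_iff uniform_density_def ennreal_mult''[symmetric] nonneg split: split_indicator)
  finally show ?thesis unfolding X_law_def ..
qed

lemma sets_pair_X_law:
  assumes "censoring_law Q"
  shows "sets (X_law f \<Otimes>\<^sub>M Q) = sets (borel :: (real \<times> real \<times> real) measure)"
proof -
  have "sets (X_law f \<Otimes>\<^sub>M Q) = sets ((borel :: real measure) \<Otimes>\<^sub>M (borel :: (real \<times> real) measure))"
    using assms unfolding censoring_law_def by (intro sets_pair_measure_cong) auto
  then show ?thesis by (simp only: borel_prod)
qed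

lemma prob_space_pair_X_law:
  assumes Q: "censoring_law Q" and f: "is_density f"
  shows "prob_space (X_law f \<Otimes>\<^sub>M Q)"
proof -
  interpret X: prob_space "X_law f" by (rule prob_space_X_law[OF f])
  interpret Q: prob_space Q using Q unfolding censoring_law_def by simp
  interpret XQ: pair_prob_space "X_law f" Q ..
  show ?thesis by (rule XQ.prob_space_axioms)
qed

lemma sets_reference_law:
  "censoring_law Q \<Longrightarrow> sets (reference_law Q) = sets (borel :: (real \<times> real \<times> real) measure)"
  unfolding reference_law_def by (rule sets_pair_X_law)

lemma prob_space_reference_law: "censoring_law Q \<Longrightarrow> prob_space (reference_law Q)"
  unfolding reference_law_def by (rule prob_space_pair_X_law[OF _ is_density_uniform])

lemma measurable_fst_reference_law:
  assumes Q: "censoring_law Q" and h [measurable]: "h \<in> borel_measurable borel"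
  shows "(\<lambda>z. h (fst z)) \<in> borel_measurable (reference_law Q)"
proof -
  have "(\<lambda>z. h (fst z)) \<in> borel_measurable ((borel :: real measure) \<Otimes>\<^sub>M (borel :: (real \<times> real) measure))"
    by measurable
  then show ?thesis
    unfolding measurable_cong_sets[OF sets_reference_law[OF Q] refl] by (simp only: borel_prod)
qed

lemma pair_X_law_eq_density:
  assumes Q: "censoring_law Q" and [measurable]: "f \<in> borel_measurable borel" and nonneg: "\<And>x. 0 \<le> f x"
  shows "X_law f \<Otimes>\<^sub>M Q = density (reference_law Q) (\<lambda>z. ennreal (2*pi * f (fst z)))"
proof -
  have "sigma_finite_measure Q"
    using Q unfolding censoring_law_def by (auto intro: prob_space_imp_sigma_finite)
  have "X_law f \<Otimes>\<^sub>M Q = density (X_law uniform_density) (\<lambda>x. ennreal (2*pi * f x)) \<Otimes>\<^sub>M density Q (\<lambda>_. 1)"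
    by (simp add: X_law_eq_density_uniform[OF _ nonneg] density_1)
  also have "\<dots> = density (X_law uniform_density \<Otimes>\<^sub>M Q) (\<lambda>(x, y). ennreal (2*pi * f x) * 1)"
    by (rule pair_measure_density)
       (auto simp: \<open>sigma_finite_measure Q\<close> density_1 measurable_cong_sets[OF sets_X_law refl])
  finally show ?thesis unfolding reference_law_def by (simp add: case_prod_beta')
qed

lemma PiM_density_iid:
  assumes fin: "finite I" and M: "prob_space M" and rho [measurable]: "rho \<in> borel_measurable M"
    and D: "prob_space (density M rho)"
  shows "PiM I (\<lambda>_. density M rho) = density (PiM I (\<lambda>_. M)) (\<lambda>\<omega>. \<Prod>i\<in>I. rho (\<omega> i))"
proof -
  interpret D: prob_space "density M rho" by (rule D)
  interpret M: prob_space M by (rule M)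
  interpret PD: product_sigma_finite "\<lambda>_. density M rho"
    by (simp add: product_sigma_finite_def D.sigma_finite_measure_axioms)
  interpret PM: product_sigma_finite "\<lambda>_. M"
    by (simp add: product_sigma_finite_def M.sigma_finite_measure_axioms)
  have "density (PiM I (\<lambda>_. M)) (\<lambda>\<omega>. \<Prod>i\<in>I. rho (\<omega> i)) = PiM I (\<lambda>_. density M rho)"
  proof (rule PD.PiM_eqI[OF fin])
    show "sets (density (PiM I (\<lambda>_. M)) (\<lambda>\<omega>. \<Prod>i\<in>I. rho (\<omega> i))) = sets (PiM I (\<lambda>_. density M rho))"
      by (simp cong: sets_PiM_cong)
    fix A assume "\<And>i. i \<in> I \<Longrightarrow> A i \<in> sets (density M rho)"
    then have A: "\<And>i. i \<in> I \<Longrightarrow> A i \<in> sets M" by simp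
    have "emeasure (density (PiM I (\<lambda>_. M)) (\<lambda>\<omega>. \<Prod>i\<in>I. rho (\<omega> i))) (Pi\<^sub>E I A)
        = (\<integral>\<^sup>+\<omega>. (\<Prod>i\<in>I. rho (\<omega> i)) * indicator (Pi\<^sub>E I A) \<omega> \<partial>PiM I (\<lambda>_. M))"
      using A by (subst emeasure_density) (auto intro!: sets_PiM_I_finite fin)
    also have "\<dots> = (\<integral>\<^sup>+\<omega>. (\<Prod>i\<in>I. rho (\<omega> i) * indicator (A i) (\<omega> i)) \<partial>PiM I (\<lambda>_. M))"
    proof (rule nn_integral_cong)
      fix \<omega> assume "\<omega> \<in> space (PiM I (\<lambda>_. M))"
      then have "indicator (Pi\<^sub>E I A) \<omega> = (\<Prod>i\<in>I. indicator (A i) (\<omega> i) :: ennreal)"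
        using fin by (auto simp: space_PiM PiE_def Pi_def indicator_def prod_zero_iff split: if_splits)
      then show "(\<Prod>i\<in>I. rho (\<omega> i)) * indicator (Pi\<^sub>E I A) \<omega> = (\<Prod>i\<in>I. rho (\<omega> i) * indicator (A i) (\<omega> i))"
        by (simp add: prod.distrib)
    qed
    also have "\<dots> = (\<Prod>i\<in>I. (\<integral>\<^sup>+x. rho x * indicator (A i) x \<partial>M))"
      using A by (subst PM.product_nn_integral_prod[OF fin]) auto
    also have "\<dots> = (\<Prod>i\<in>I. emeasure (density M rho) (A i))"
      using A by (intro prod.cong refl) (simp add: emeasure_density)
    finally show "emeasure (density (PiM I (\<lambda>_. M)) (\<lambda>\<omega>. \<Prod>i\<in>I. rho (\<omega> i))) (Pi\<^sub>E I A)
        = (\<Prod>i\<in>I. emeasure (density M rho) (A i))" .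
  qed
  then show ?thesis ..
qed

lemma sets_obs_law [simp]: "sets (obs_law Q f) = sets borel"
  unfolding obs_law_eq_distr_censor by simp

lemma censor_measurable_pair_X_law:
  "censoring_law Q \<Longrightarrow> censor \<in> measurable (X_law f \<Otimes>\<^sub>M Q) (obs_law Q' f')"
  using censor_measurable by (simp add: measurable_cong_sets[OF sets_pair_X_law sets_obs_law])

lemma prob_space_obs_law:
  assumes Q: "censoring_law Q" and f: "is_density f"
  shows "prob_space (obs_law Q f)"
proof -
  interpret XQ: prob_space "X_law f \<Otimes>\<^sub>M Q" by (rule prob_space_pair_X_law[OF Q f])
  show ?thesis unfolding obs_law_eq_distr_censor
    by (rule XQ.prob_space_distr) (simp add: measurable_cong_sets[OF sets_pair_X_law[OF Q] refl] censor_measurable)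
qed

lemma sample_law_eq_distr:
  assumes Q: "censoring_law Q" and f: "is_density f"
  shows "sample_law Q f n
       = distr (PiM {..<n} (\<lambda>_. X_law f \<Otimes>\<^sub>M Q)) (PiM {..<n} (\<lambda>_. obs_law Q f)) (censor_sample n)"
proof -
  have "distr (PiM {..<n} (\<lambda>_. X_law f \<Otimes>\<^sub>M Q)) (PiM {..<n} (\<lambda>_. obs_law Q f)) (censor_sample n)
      = PiM {..<n} (\<lambda>i. distr (X_law f \<Otimes>\<^sub>M Q) (obs_law Q f) censor)"
    by (rule distr_PiM_finite_prob_space')
       (auto simp: prob_space_pair_X_law[OF Q f] prob_space_obs_law[OF Q f] censor_measurable_pair_X_law[OF Q])
  also have "(\<lambda>i. distr (X_law f \<Otimes>\<^sub>M Q) (obs_law Q f) censor) = (\<lambda>i. obs_law Q f)"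
    by (rule ext) (simp add: obs_law_eq_distr_censor[of Q f] cong: distr_cong)
  finally show ?thesis unfolding sample_law_def ..
qed

lemma censor_sample_measurable:
  assumes "censoring_law Q"
  shows "censor_sample n
       \<in> measurable (reference_sample Q n) (sample_space n)"
proof -
  have [measurable]: "censor \<in> measurable (reference_law Q) borel"
    using censor_measurable unfolding measurable_cong_sets[OF sets_reference_law[OF assms] refl] .
  show ?thesis unfolding compose_def by measurable
qed

definition sq_L2_dist :: "(real \<Rightarrow> real) \<Rightarrow> (real \<Rightarrow> real) \<Rightarrow> ennreal" where
  "sq_L2_dist g f = (\<integral>\<^sup>+x\<in>circ. ennreal ((g x - f x)\<^sup>2) \<partial>lborel)"

lemma sq_L2_dist_estimator_measurable:
  assumes fh: "fh \<in> estimators n" and [measurable]: "f \<in> borel_measurable borel"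
  shows "(\<lambda>\<omega>. sq_L2_dist (fh \<omega>) f) \<in> borel_measurable (sample_space n)"
proof -
  have [measurable]: "(\<lambda>(\<omega>, x). fh \<omega> x)
      \<in> borel_measurable (sample_space n \<Otimes>\<^sub>M lborel)"
    using fh unfolding estimators_def by simp
  have "(\<lambda>(\<omega>, x). ennreal ((fh \<omega> x - f x)\<^sup>2) * indicator circ x)
      \<in> borel_measurable (sample_space n \<Otimes>\<^sub>M lborel)"
    by measurable
  then show ?thesis unfolding sq_L2_dist_def by (rule lborel.borel_measurable_nn_integral)
qed

lemma risk_eq_reference_integral:
  assumes Q: "censoring_law Q" and f: "is_density f" and nonneg: "\<And>x. 0 \<le> f x"
    and fh: "fh \<in> estimators n"
  shows "risk Q n fh f = (\<integral>\<^sup>+\<omega>. (\<Prod>i<n. ennreal (2*pi * f (fst (\<omega> i))))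
           * sq_L2_dist (fh (censor_sample n \<omega>)) f \<partial>reference_sample Q n)"
proof -
  let ?P = "reference_sample Q n"
  let ?F = "PiM {..<n} (\<lambda>_. X_law f \<Otimes>\<^sub>M Q)"
  let ?O = "PiM {..<n} (\<lambda>_. obs_law Q f)"
  have f_meas [measurable]: "f \<in> borel_measurable borel"
    using f unfolding is_density_def by simp
  have rho [measurable]: "(\<lambda>z. ennreal (2*pi * f (fst z))) \<in> borel_measurable (reference_law Q)"
    by (rule measurable_fst_reference_law[OF Q]) measurable
  have sets_O: "sets ?O = sets (sample_space n)"
    by (intro sets_PiM_cong) auto
  have sets_F: "sets ?F = sets ?P"
    by (intro sets_PiM_cong) (simp_all only: sets_pair_X_law[OF Q] sets_reference_law[OF Q])
  have censor_P: "censor_sample n \<in> measurable ?P ?O"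
    using censor_sample_measurable[OF Q] by (simp add: measurable_cong_sets[OF refl sets_O])
  have loss: "(\<lambda>\<omega>. sq_L2_dist (fh \<omega>) f) \<in> borel_measurable ?O"
    using sq_L2_dist_estimator_measurable[OF fh f_meas] by (simp add: measurable_cong_sets[OF sets_O refl])
  have "risk Q n fh f = (\<integral>\<^sup>+\<omega>. sq_L2_dist (fh \<omega>) f \<partial>sample_law Q f n)"
    unfolding risk_def sq_L2_dist_def ..
  also have "\<dots> = (\<integral>\<^sup>+\<omega>. sq_L2_dist (fh (censor_sample n \<omega>)) f \<partial>?F)"
    unfolding sample_law_eq_distr[OF Q f]
    by (rule nn_integral_distr)
       (simp_all add: measurable_cong_sets[OF sets_F refl] measurable_cong_sets[OF sets_distr refl] censor_P loss)
  also have "?F = density ?P (\<lambda>\<omega>. \<Prod>i<n. ennreal (2*pi * f (fst (\<omega> i))))"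
    unfolding pair_X_law_eq_density[OF Q f_meas nonneg]
    by (rule PiM_density_iid)
       (auto simp: prob_space_reference_law[OF Q] pair_X_law_eq_density[OF Q f_meas nonneg, symmetric]
         prob_space_pair_X_law[OF Q f])
  also have "(\<integral>\<^sup>+\<omega>. sq_L2_dist (fh (censor_sample n \<omega>)) f \<partial>density ?P (\<lambda>\<omega>. \<Prod>i<n. ennreal (2*pi * f (fst (\<omega> i)))))
      = (\<integral>\<^sup>+\<omega>. (\<Prod>i<n. ennreal (2*pi * f (fst (\<omega> i)))) * sq_L2_dist (fh (censor_sample n \<omega>)) f \<partial>?P)"
    by (rule nn_integral_density) (use censor_P loss in measurable)
  finally show ?thesis .
qed

section \<open>Assouad's lemma\<close>

lemma assouad_two_point:
  fixes d1 d2 :: "'a \<Rightarrow> ennreal" and c :: "'a \<Rightarrow> real"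
  assumes [measurable]: "d1 \<in> borel_measurable M" "d2 \<in> borel_measurable M" "c \<in> borel_measurable M"
  shows "ennreal (2 * \<gamma>\<^sup>2) * (\<integral>\<^sup>+\<omega>. min (d1 \<omega>) (d2 \<omega>) \<partial>M)
       \<le> (\<integral>\<^sup>+\<omega>. d1 \<omega> * ennreal ((c \<omega> - \<gamma>)\<^sup>2) \<partial>M) + (\<integral>\<^sup>+\<omega>. d2 \<omega> * ennreal ((c \<omega> + \<gamma>)\<^sup>2) \<partial>M)"
proof -
  have "ennreal (2 * \<gamma>\<^sup>2) * (\<integral>\<^sup>+\<omega>. min (d1 \<omega>) (d2 \<omega>) \<partial>M)
      = (\<integral>\<^sup>+\<omega>. ennreal (2 * \<gamma>\<^sup>2) * min (d1 \<omega>) (d2 \<omega>) \<partial>M)"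
    by (rule nn_integral_cmult[symmetric]) measurable
  also have "\<dots> \<le> (\<integral>\<^sup>+\<omega>. d1 \<omega> * ennreal ((c \<omega> - \<gamma>)\<^sup>2) + d2 \<omega> * ennreal ((c \<omega> + \<gamma>)\<^sup>2) \<partial>M)"
  proof (rule nn_integral_mono)
    fix \<omega>
    have "2 * \<gamma>\<^sup>2 \<le> (c \<omega> - \<gamma>)\<^sup>2 + (c \<omega> + \<gamma>)\<^sup>2" by (simp add: power2_eq_square algebra_simps)
    then have "ennreal (2 * \<gamma>\<^sup>2) \<le> ennreal ((c \<omega> - \<gamma>)\<^sup>2) + ennreal ((c \<omega> + \<gamma>)\<^sup>2)"
      by (simp add: ennreal_plus[symmetric] del: ennreal_plus)
    then have "ennreal (2 * \<gamma>\<^sup>2) * min (d1 \<omega>) (d2 \<omega>)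
        \<le> ennreal ((c \<omega> - \<gamma>)\<^sup>2) * min (d1 \<omega>) (d2 \<omega>) + ennreal ((c \<omega> + \<gamma>)\<^sup>2) * min (d1 \<omega>) (d2 \<omega>)"
      by (metis distrib_right mult_right_mono zero_le)
    also have "\<dots> \<le> d1 \<omega> * ennreal ((c \<omega> - \<gamma>)\<^sup>2) + d2 \<omega> * ennreal ((c \<omega> + \<gamma>)\<^sup>2)"
      by (intro add_mono) (simp_all add: mult.commute[of "ennreal _"] mult_right_mono)
    finally show "ennreal (2 * \<gamma>\<^sup>2) * min (d1 \<omega>) (d2 \<omega>)
        \<le> d1 \<omega> * ennreal ((c \<omega> - \<gamma>)\<^sup>2) + d2 \<omega> * ennreal ((c \<omega> + \<gamma>)\<^sup>2)" .
  qed
  also have "\<dots> = (\<integral>\<^sup>+\<omega>. d1 \<omega> * ennreal ((c \<omega> - \<gamma>)\<^sup>2) \<partial>M) + (\<integral>\<^sup>+\<omega>. d2 \<omega> * ennreal ((c \<omega> + \<gamma>)\<^sup>2) \<partial>M)"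
    by (rule nn_integral_add) measurable
  finally show ?thesis .
qed

lemma assouad_coordinate:
  fixes d :: "nat set \<Rightarrow> 'a \<Rightarrow> ennreal" and c :: "'a \<Rightarrow> real"
  assumes K: "finite K" and k: "k \<in> K"
    and d_meas: "\<And>S. S \<in> Pow K \<Longrightarrow> d S \<in> borel_measurable M"
    and c_meas: "c \<in> borel_measurable M"
    and affinity: "\<And>S. S \<in> Pow K \<Longrightarrow> A \<le> (\<integral>\<^sup>+\<omega>. min (d S \<omega>) (d (flip S k) \<omega>) \<partial>M)"
  shows "of_nat (2 ^ card K) * ennreal (\<gamma>\<^sup>2) * A
       \<le> (\<Sum>S\<in>Pow K. \<integral>\<^sup>+\<omega>. d S \<omega> * ennreal ((c \<omega> - \<gamma> * vertex_sign S k)\<^sup>2) \<partial>M)"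
proof -
  define T where "T S = (\<integral>\<^sup>+\<omega>. d S \<omega> * ennreal ((c \<omega> - \<gamma> * vertex_sign S k)\<^sup>2) \<partial>M)" for S
  have pair: "ennreal (2 * \<gamma>\<^sup>2) * A \<le> T S + T (flip S k)" if S: "S \<in> Pow K" for S
  proof -
    note [measurable] = d_meas[OF S] d_meas[OF flip_in_Pow[OF k S]] c_meas
    have "ennreal (2 * \<gamma>\<^sup>2) * A \<le> ennreal (2 * \<gamma>\<^sup>2) * (\<integral>\<^sup>+\<omega>. min (d S \<omega>) (d (flip S k) \<omega>) \<partial>M)"
      by (intro mult_left_mono affinity[OF S]) simp
    also have "\<dots> \<le> T S + T (flip S k)"
    proof (cases "vertex_sign S k = 1")
      case True
      then show ?thesis
        using assouad_two_point[of "d S" M "d (flip S k)" c \<gamma>]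
        by (simp add: T_def vertex_sign_flip)
    next
      case False
      then have "vertex_sign S k = -1" using vertex_sign_cases by blast
      then show ?thesis
        using assouad_two_point[of "d (flip S k)" M "d S" c \<gamma>]
        by (simp add: T_def vertex_sign_flip min.commute add.commute)
    qed
    finally show ?thesis .
  qed
  have "bij_betw (\<lambda>S. flip S k) (Pow K) (Pow K)"
    by (rule bij_betwI[where g="\<lambda>S. flip S k"]) (auto simp: flip_in_Pow[OF k] simp del: Pow_iff)
  then have "(\<Sum>S\<in>Pow K. T (flip S k)) = (\<Sum>S\<in>Pow K. T S)"
    using sum.reindex_bij_betw by blast
  then have "2 * (\<Sum>S\<in>Pow K. T S) = (\<Sum>S\<in>Pow K. T S + T (flip S k))"
    by (simp add: sum.distrib mult_2)
  also have "\<dots> \<ge> (\<Sum>S\<in>Pow K. ennreal (2 * \<gamma>\<^sup>2) * A)"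
    by (intro sum_mono pair)
  finally have "2 * (of_nat (2 ^ card K) * ennreal (\<gamma>\<^sup>2) * A) \<le> 2 * (\<Sum>S\<in>Pow K. T S)"
    using K by (simp add: card_Pow ennreal_mult ac_simps)
  then show ?thesis
    unfolding T_def by (subst (asm) ennreal_mult_le_mult_iff) auto
qed

lemma assouad:
  fixes d :: "nat set \<Rightarrow> 'a \<Rightarrow> ennreal" and c :: "nat \<Rightarrow> 'a \<Rightarrow> real"
  assumes K: "finite K"
    and d_meas: "\<And>S. S \<in> Pow K \<Longrightarrow> d S \<in> borel_measurable M"
    and c_meas: "\<And>k. k \<in> K \<Longrightarrow> c k \<in> borel_measurable M"
    and affinity: "\<And>S k. S \<in> Pow K \<Longrightarrow> k \<in> K \<Longrightarrow> A \<le> (\<integral>\<^sup>+\<omega>. min (d S \<omega>) (d (flip S k) \<omega>) \<partial>M)"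
  shows "of_nat (card K) * (of_nat (2 ^ card K) * ennreal (\<gamma>\<^sup>2) * A)
       \<le> (\<Sum>S\<in>Pow K. \<integral>\<^sup>+\<omega>. d S \<omega> * (\<Sum>k\<in>K. ennreal ((c k \<omega> - \<gamma> * vertex_sign S k)\<^sup>2)) \<partial>M)"
proof -
  have "(\<Sum>k\<in>K. of_nat (2 ^ card K) * ennreal (\<gamma>\<^sup>2) * A)
      \<le> (\<Sum>k\<in>K. \<Sum>S\<in>Pow K. \<integral>\<^sup>+\<omega>. d S \<omega> * ennreal ((c k \<omega> - \<gamma> * vertex_sign S k)\<^sup>2) \<partial>M)"
    by (rule sum_mono, rule assouad_coordinate[OF K]) (auto intro: d_meas c_meas affinity)
  then have "of_nat (card K) * (of_nat (2 ^ card K) * ennreal (\<gamma>\<^sup>2) * A)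
      \<le> (\<Sum>k\<in>K. \<Sum>S\<in>Pow K. \<integral>\<^sup>+\<omega>. d S \<omega> * ennreal ((c k \<omega> - \<gamma> * vertex_sign S k)\<^sup>2) \<partial>M)"
    by simp
  also have "\<dots> = (\<Sum>S\<in>Pow K. \<Sum>k\<in>K. \<integral>\<^sup>+\<omega>. d S \<omega> * ennreal ((c k \<omega> - \<gamma> * vertex_sign S k)\<^sup>2) \<partial>M)"
    by (rule sum.swap)
  also have "\<dots> = (\<Sum>S\<in>Pow K. \<integral>\<^sup>+\<omega>. d S \<omega> * (\<Sum>k\<in>K. ennreal ((c k \<omega> - \<gamma> * vertex_sign S k)\<^sup>2)) \<partial>M)"
  proof (rule sum.cong[OF refl])
    fix S assume S: "S \<in> Pow K"
    note [measurable] = d_meas[OF S]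
    show "(\<Sum>k\<in>K. \<integral>\<^sup>+\<omega>. d S \<omega> * ennreal ((c k \<omega> - \<gamma> * vertex_sign S k)\<^sup>2) \<partial>M)
        = (\<integral>\<^sup>+\<omega>. d S \<omega> * (\<Sum>k\<in>K. ennreal ((c k \<omega> - \<gamma> * vertex_sign S k)\<^sup>2)) \<partial>M)"
      unfolding sum_distrib_left by (rule nn_integral_sum[symmetric]) (use c_meas in measurable)
  qed
  finally show ?thesis .
qed

lemma nn_integral_reference_law_fst:
  assumes Q: "censoring_law Q" and h [measurable]: "h \<in> borel_measurable borel"
    and nonneg: "\<And>x. 0 \<le> h x" and h_int: "integrable circ_measure h"
  shows "(\<integral>\<^sup>+z. ennreal (h (fst z)) \<partial>reference_law Q) = ennreal (integral\<^sup>L circ_measure h / (2*pi))"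
proof -
  interpret Q: prob_space Q using Q unfolding censoring_law_def by simp
  have "(\<lambda>z. ennreal (h (fst z))) \<in> borel_measurable (X_law uniform_density \<Otimes>\<^sub>M Q)"
    using measurable_fst_reference_law[OF Q, of "\<lambda>x. ennreal (h x)"] by (simp add: reference_law_def)
  then have "(\<integral>\<^sup>+z. ennreal (h (fst z)) \<partial>reference_law Q)
      = (\<integral>\<^sup>+x. \<integral>\<^sup>+y. ennreal (h (fst (x, y))) \<partial>Q \<partial>X_law uniform_density)"
    unfolding reference_law_def by (rule Q.nn_integral_fst[symmetric])
  also have "\<dots> = (\<integral>\<^sup>+x. ennreal (h x) \<partial>X_law uniform_density)"
    by (simp add: Q.emeasure_space_1)
  also have "\<dots> = (\<integral>\<^sup>+x. ennreal (1/(2*pi)) * (ennreal (h x) * indicator circ x) \<partial>lborel)"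
    unfolding X_law_def by (subst nn_integral_density) (auto simp: uniform_density_def ac_simps)
  also have "\<dots> = ennreal (1/(2*pi)) * (\<integral>\<^sup>+x. ennreal (h x) \<partial>circ_measure)"
    by (subst nn_integral_cmult) (simp_all add: set_nn_integral_circ_measure[symmetric])
  also have "\<dots> = ennreal (integral\<^sup>L circ_measure h / (2*pi))"
    by (simp add: nn_integral_eq_integral[OF h_int] nonneg ennreal_mult''[symmetric] integral_nonneg)
  finally show ?thesis .
qed

lemma nn_integral_PiM_prod_fst:
  assumes Q: "censoring_law Q" and h [measurable]: "h \<in> borel_measurable borel"
  shows "(\<integral>\<^sup>+\<omega>. (\<Prod>i<n. ennreal (h (fst (\<omega> i)))) \<partial>reference_sample Q n)
       = (\<integral>\<^sup>+z. ennreal (h (fst z)) \<partial>reference_law Q) ^ n"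
proof -
  interpret M: prob_space "reference_law Q" by (rule prob_space_reference_law[OF Q])
  interpret P: product_sigma_finite "\<lambda>_. reference_law Q"
    by (simp add: product_sigma_finite_def M.sigma_finite_measure_axioms)
  have [measurable]: "(\<lambda>z. h (fst z)) \<in> borel_measurable (reference_law Q)"
    by (rule measurable_fst_reference_law[OF Q h])
  have "(\<integral>\<^sup>+\<omega>. (\<Prod>i<n. ennreal (h (fst (\<omega> i)))) \<partial>reference_sample Q n)
      = (\<Prod>i<n. (\<integral>\<^sup>+z. ennreal (h (fst z)) \<partial>reference_law Q))"
    by (rule P.product_nn_integral_prod[where f="\<lambda>i z. ennreal (h (fst z))"]) auto
  then show ?thesis by simp
qed

lemma real_sqrt_prod: "sqrt (prod f A) = (\<Prod>i\<in>A. sqrt (f i))"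
  by (induction A rule: infinite_finite_induct) (auto simp: real_sqrt_mult)

definition cube_likelihood :: "real \<Rightarrow> nat \<Rightarrow> nat set \<Rightarrow> nat \<Rightarrow> (nat \<Rightarrow> real \<times> real \<times> real) \<Rightarrow> real" where
  "cube_likelihood \<gamma> m S n \<omega> = (\<Prod>i<n. cube_ratio \<gamma> m S (fst (\<omega> i)))"

lemma cube_likelihood_measurable:
  assumes Q: "censoring_law Q"
  shows "cube_likelihood \<gamma> m S n \<in> borel_measurable (reference_sample Q n)"
proof -
  have [measurable]: "(\<lambda>z. cube_ratio \<gamma> m S (fst z)) \<in> borel_measurable (reference_law Q)"
    by (rule measurable_fst_reference_law[OF Q cube_ratio_measurable])
  show ?thesis unfolding cube_likelihood_def[abs_def] by measurable
qed

lemma ennreal_cube_likelihood: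
  assumes "cube_admissible \<gamma> m"
  shows "ennreal (cube_likelihood \<gamma> m S n \<omega>) = (\<Prod>i<n. ennreal (cube_ratio \<gamma> m S (fst (\<omega> i))))"
  unfolding cube_likelihood_def
  by (rule prod_ennreal[symmetric]) (use cube_ratio_bounds(1)[OF assms] in \<open>simp add: order_trans[of 0 "1/2"]\<close>)

lemma cube_likelihood_nonneg: "cube_admissible \<gamma> m \<Longrightarrow> 0 \<le> cube_likelihood \<gamma> m S n \<omega>"
  unfolding cube_likelihood_def
  by (intro prod_nonneg) (use cube_ratio_bounds(1) in \<open>force intro: order_trans[of 0 "1/2"]\<close>)

lemma nn_integral_cube_likelihood:
  assumes Q: "censoring_law Q" and adm: "cube_admissible \<gamma> m"
  shows "(\<integral>\<^sup>+\<omega>. ennreal (cube_likelihood \<gamma> m S n \<omega>) \<partial>reference_sample Q n) = 1"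
proof -
  have "(\<integral>\<^sup>+z. ennreal (cube_ratio \<gamma> m S (fst z)) \<partial>reference_law Q) = 1"
    using cube_ratio_bounds(1)[OF adm]
    by (subst nn_integral_reference_law_fst[OF Q cube_ratio_measurable _ integrable_cube_ratio[OF adm]])
       (auto simp: integral_cube_ratio intro: order_trans[of 0 "1/2"])
  then show ?thesis
    unfolding ennreal_cube_likelihood[OF adm] by (simp add: nn_integral_PiM_prod_fst[OF Q])
qed

lemma cube_likelihood_affinity:
  assumes Q: "censoring_law Q" and adm: "cube_admissible \<gamma> m" and k: "k \<in> {1..m}"
    and small: "4 * pi * \<gamma>\<^sup>2 * real n \<le> 1/4" "4 * pi * \<gamma>\<^sup>2 \<le> 1"
  shows "ennreal (3/4) \<le> (\<integral>\<^sup>+\<omega>. ennreal (sqrt (cube_likelihood \<gamma> m S n \<omega> * cube_likelihood \<gamma> m (flip S k) n \<omega>))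
                            \<partial>reference_sample Q n)"
proof -
  define h where "h x = sqrt (cube_ratio \<gamma> m S x * cube_ratio \<gamma> m (flip S k) x)" for x
  have h_meas [measurable]: "h \<in> borel_measurable borel" unfolding h_def[abs_def] by measurable
  have h_nonneg: "0 \<le> h x" for x
    unfolding h_def using cube_ratio_bounds(1)[OF adm, of S x] cube_ratio_bounds(1)[OF adm, of "flip S k" x] by simp
  have h_int: "integrable circ_measure h"
    unfolding h_def by (rule integrable_sqrt_cube_ratio_mult[OF adm])
  have "1 - 4 * pi * \<gamma>\<^sup>2 \<le> integral\<^sup>L circ_measure h / (2*pi)"
    using integral_sqrt_cube_ratio_flip[OF adm k, of S] unfolding h_def[symmetric] by (simp add: field_simps)
  then have "(1 - 4 * pi * \<gamma>\<^sup>2) ^ n \<le> (integral\<^sup>L circ_measure h / (2*pi)) ^ n"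
    using small(2) by (intro power_mono) auto
  moreover have "3/4 \<le> (1 - 4 * pi * \<gamma>\<^sup>2) ^ n"
    using Bernoulli_inequality[of "- (4 * pi * \<gamma>\<^sup>2)" n] small by (simp add: algebra_simps)
  moreover have "sqrt (cube_likelihood \<gamma> m S n \<omega> * cube_likelihood \<gamma> m (flip S k) n \<omega>) = (\<Prod>i<n. h (fst (\<omega> i)))" for \<omega>
    unfolding h_def cube_likelihood_def by (simp only: prod.distrib[symmetric] real_sqrt_prod)
  then have "(\<integral>\<^sup>+\<omega>. ennreal (sqrt (cube_likelihood \<gamma> m S n \<omega> * cube_likelihood \<gamma> m (flip S k) n \<omega>))
                 \<partial>reference_sample Q n)
      = ennreal ((integral\<^sup>L circ_measure h / (2*pi)) ^ n)"
    using h_nonneg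
    by (simp add: prod_ennreal[symmetric] nn_integral_PiM_prod_fst[OF Q h_meas] integral_nonneg ennreal_power
          nn_integral_reference_law_fst[OF Q h_meas h_nonneg h_int])
  ultimately show ?thesis by (simp add: ennreal_leI)
qed

lemma cube_likelihood_min_flip:
  assumes Q: "censoring_law Q" and adm: "cube_admissible \<gamma> m" and k: "k \<in> {1..m}"
    and small: "4 * pi * \<gamma>\<^sup>2 * real n \<le> 1/4" "4 * pi * \<gamma>\<^sup>2 \<le> 1"
  shows "ennreal (1/4) \<le> (\<integral>\<^sup>+\<omega>. min (ennreal (cube_likelihood \<gamma> m S n \<omega>)) (ennreal (cube_likelihood \<gamma> m (flip S k) n \<omega>))
                            \<partial>reference_sample Q n)"
  by (rule nn_integral_min_ge_of_affinity[OF cube_likelihood_measurable[OF Q] cube_likelihood_measurable[OF Q]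
        cube_likelihood_nonneg[OF adm] cube_likelihood_nonneg[OF adm]
        nn_integral_cube_likelihood[OF Q adm] nn_integral_cube_likelihood[OF Q adm]
        cube_likelihood_affinity[OF Q adm k small]])

lemma coeff_estimator_measurable:
  assumes Q: "censoring_law Q" and fh: "fh \<in> estimators n"
  shows "(\<lambda>\<omega>. coeff (fh (censor_sample n \<omega>)) k) \<in> borel_measurable (reference_sample Q n)"
proof -
  let ?B = "sample_space n"
  have [measurable]: "(\<lambda>(\<omega>, x). fh \<omega> x) \<in> borel_measurable (?B \<Otimes>\<^sub>M lborel)"
    using fh unfolding estimators_def by simp
  have [measurable]: "censor_sample n \<in> measurable (reference_sample Q n) ?B"
    by (rule censor_sample_measurable[OF Q])
  have "(\<lambda>(\<omega>, x). indicator circ x *\<^sub>R (fh (censor_sample n \<omega>) x * trig_basis k x))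
      \<in> borel_measurable (reference_sample Q n \<Otimes>\<^sub>M lborel)"
    by measurable
  then show ?thesis
    unfolding coeff_def set_lebesgue_integral_def by (rule lborel.borel_measurable_lebesgue_integral)
qed

lemma risk_cube_density_ge:
  assumes Q: "censoring_law Q" and adm: "cube_admissible \<gamma> m" and fh: "fh \<in> estimators n"
  shows "(\<integral>\<^sup>+\<omega>. ennreal (cube_likelihood \<gamma> m S n \<omega>)
            * (\<Sum>k\<in>{1..m}. ennreal ((coeff (fh (censor_sample n \<omega>)) k - \<gamma> * vertex_sign S k)\<^sup>2))
          \<partial>reference_sample Q n)
       \<le> risk Q n fh (cube_density \<gamma> m S)"
  unfolding risk_eq_reference_integral[OF Q cube_density_is_density[OF adm] cube_density_nonneg[OF adm] fh]
proof (rule nn_integral_mono)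
  fix \<omega>
  let ?g = "fh (censor_sample n \<omega>)"
  have "(\<lambda>(\<omega>, x). fh \<omega> x)
      \<in> borel_measurable (sample_space n \<Otimes>\<^sub>M lborel)"
    using fh unfolding estimators_def by simp
  from measurable_Pair2[OF this] have g_meas: "?g \<in> borel_measurable borel"
    by (simp add: compose_def space_PiM)
  have "(\<Sum>k\<in>{1..m}. ennreal ((coeff ?g k - \<gamma> * vertex_sign S k)\<^sup>2))
      = ennreal (\<Sum>k\<in>{1..m}. (coeff ?g k - cube_coeff \<gamma> S k)\<^sup>2)"
    by (subst sum_ennreal) (auto intro!: sum.cong simp: cube_coeff_def)
  also have "\<dots> \<le> ennreal (\<Sum>k\<le>m. (coeff ?g k - cube_coeff \<gamma> S k)\<^sup>2)"
    by (intro ennreal_leI sum_mono2) auto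
  also have "\<dots> \<le> sq_L2_dist ?g (cube_density \<gamma> m S)"
    unfolding sq_L2_dist_def cube_density_def by (rule bessel_inequality[OF g_meas]) simp
  finally show "ennreal (cube_likelihood \<gamma> m S n \<omega>) * (\<Sum>k\<in>{1..m}. ennreal ((coeff ?g k - \<gamma> * vertex_sign S k)\<^sup>2))
      \<le> (\<Prod>i<n. ennreal (2*pi * cube_density \<gamma> m S (fst (\<omega> i)))) * sq_L2_dist ?g (cube_density \<gamma> m S)"
    unfolding ennreal_cube_likelihood[OF adm] cube_ratio_def by (rule mult_left_mono) simp
qed

lemma minimax_risk_ge_cube:
  assumes Q: "censoring_law Q" and \<beta>: "\<beta> > 0" and adm: "cube_admissible \<gamma> m"
    and sobolev: "real m * ((real m + 1) powr \<beta>)\<^sup>2 * \<gamma>\<^sup>2 < R\<^sup>2 / pi powr (2*\<beta>)"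
    and small: "4 * pi * \<gamma>\<^sup>2 * real n \<le> 1/4" "4 * pi * \<gamma>\<^sup>2 \<le> 1"
  shows "ennreal (real m * \<gamma>\<^sup>2 / 4) \<le> minimax_risk \<beta> R Q n"
  unfolding minimax_risk_def
proof (rule INF_greatest)
  fix fh assume fh: "fh \<in> estimators n"
  let ?V = "SUP f \<in> {f. is_density f \<and> f \<in> sobolev \<beta> R}. risk Q n fh f"
  let ?K = "{1..m}"
  have "of_nat (card ?K) * (of_nat (2 ^ card ?K) * ennreal (\<gamma>\<^sup>2) * ennreal (1/4))
      \<le> (\<Sum>S\<in>Pow ?K. \<integral>\<^sup>+\<omega>. ennreal (cube_likelihood \<gamma> m S n \<omega>)
           * (\<Sum>k\<in>?K. ennreal ((coeff (fh (censor_sample n \<omega>)) k - \<gamma> * vertex_sign S k)\<^sup>2))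
           \<partial>reference_sample Q n)"
    using cube_likelihood_measurable[OF Q] coeff_estimator_measurable[OF Q fh]
      cube_likelihood_min_flip[OF Q adm _ small]
    by (intro assouad) auto
  also have "\<dots> \<le> (\<Sum>S\<in>Pow ?K. risk Q n fh (cube_density \<gamma> m S))"
    by (intro sum_mono risk_cube_density_ge[OF Q adm fh])
  also have "\<dots> \<le> (\<Sum>S\<in>Pow ?K. ?V)"
    using cube_density_is_density[OF adm] cube_density_sobolev[OF adm \<beta> sobolev]
    by (intro sum_mono SUP_upper) auto
  also have "\<dots> = of_nat (2 ^ card ?K) * ?V"
    by (simp add: card_Pow)
  finally have "of_nat (2 ^ card ?K) * ennreal (real m * \<gamma>\<^sup>2 / 4) \<le> of_nat (2 ^ card ?K) * ?V"
    by (simp add: ennreal_mult''[symmetric] ennreal_of_nat_eq_real_of_nat ac_simps)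
  then show "ennreal (real m * \<gamma>\<^sup>2 / 4) \<le> ?V"
    by (subst (asm) ennreal_mult_le_mult_iff) (auto simp: power_eq_top_ennreal)
qed

section \<open>Choice of the parameters\<close>

lemma nat_floor_bounds:
  fixes x :: real
  assumes "1 \<le> x"
  shows "1 \<le> nat \<lfloor>x\<rfloor>" "x / 2 \<le> real (nat \<lfloor>x\<rfloor>)" "real (nat \<lfloor>x\<rfloor>) \<le> x"
proof -
  have "1 \<le> \<lfloor>x\<rfloor>" "real_of_int \<lfloor>x\<rfloor> \<le> x" "x < real_of_int \<lfloor>x\<rfloor> + 1"
    using assms by linarith+
  then show "1 \<le> nat \<lfloor>x\<rfloor>" "x / 2 \<le> real (nat \<lfloor>x\<rfloor>)" "real (nat \<lfloor>x\<rfloor>) \<le> x"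
    by linarith+
qed

lemma bandwidth_bounds:
  fixes \<beta> :: real and n :: nat
  assumes \<beta>: "\<beta> \<ge> 1/2" and n: "n \<ge> 1"
  defines "x \<equiv> real n powr (1 / (2*\<beta>+1))"
  defines "m \<equiv> nat \<lfloor>x\<rfloor>"
  shows "1 \<le> m" "x / 2 \<le> real m" "real m \<le> sqrt (real n)" "real m powr (2*\<beta>+1) \<le> real n"
proof -
  have e: "0 < 1 / (2*\<beta>+1)" "1 / (2*\<beta>+1) \<le> 1/2" using \<beta> by (auto simp: field_simps)
  have "1 \<le> x" unfolding x_def using n e by (simp add: ge_one_powr_ge_zero)
  note floor = nat_floor_bounds[OF this, folded m_def]
  show "1 \<le> m" "x / 2 \<le> real m" by (fact floor(1), fact floor(2))
  have "x \<le> real n powr (1/2)" unfolding x_def using n e by (intro powr_mono) auto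
  then show "real m \<le> sqrt (real n)" using floor(3) n by (simp add: powr_half_sqrt)
  have "real m powr (2*\<beta>+1) \<le> x powr (2*\<beta>+1)" by (rule powr_mono2) (use floor(3) \<beta> in auto)
  also have "x powr (2*\<beta>+1) = real n" unfolding x_def using n \<beta> by (simp add: powr_powr)
  finally show "real m powr (2*\<beta>+1) \<le> real n" .
qed

lemma cube_admissible_if_le:
  assumes "0 \<le> \<gamma>" "\<gamma> * real m \<le> sqrt a" "a \<le> 1 / (16*pi)"
  shows "cube_admissible \<gamma> m"
proof -
  have "2 * pi * \<gamma> * real m / sqrt pi = 2 * (pi / sqrt pi) * (\<gamma> * real m)"
    by (simp add: ac_simps)
  also have "\<dots> = 2 * sqrt pi * (\<gamma> * real m)"
    by (simp add: real_div_sqrt)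
  also have "\<dots> \<le> 2 * sqrt pi * sqrt a"
    using assms(2) by (intro mult_left_mono) auto
  also have "\<dots> = 2 * sqrt (pi * a)" by (simp add: real_sqrt_mult)
  also have "\<dots> \<le> 2 * sqrt (1/16)"
    using assms(3) by (intro mult_left_mono real_sqrt_le_mono) (auto simp: field_simps)
  also have "\<dots> = 1/2" by (simp add: real_sqrt_divide)
  finally show ?thesis unfolding cube_admissible_def using assms(1) by simp
qed

lemma cube_sobolev_condition:
  assumes \<beta>: "\<beta> > 0" and m: "1 \<le> m" and R: "R > 0"
    and m\<gamma>: "real m powr (2*\<beta>+1) * \<gamma>\<^sup>2 \<le> a" and a: "a \<le> R\<^sup>2 / (2 * (2*pi) powr (2*\<beta>))"
  shows "real m * ((real m + 1) powr \<beta>)\<^sup>2 * \<gamma>\<^sup>2 < R\<^sup>2 / pi powr (2*\<beta>)"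
proof -
  have "((real m + 1) powr \<beta>)\<^sup>2 \<le> ((2 * real m) powr \<beta>)\<^sup>2"
    using m \<beta> by (intro power_mono powr_mono2) auto
  also have "\<dots> = 2 powr (2*\<beta>) * real m powr (2*\<beta>)"
    using m by (simp add: powr_mult power2_eq_square powr_add[symmetric] mult_ac)
  finally have "real m * ((real m + 1) powr \<beta>)\<^sup>2 * \<gamma>\<^sup>2 \<le> 2 powr (2*\<beta>) * (real m powr (2*\<beta>+1) * \<gamma>\<^sup>2)"
    using m by (simp add: powr_add mult_right_mono mult_left_mono mult_ac)
  also have "\<dots> \<le> 2 powr (2*\<beta>) * (R\<^sup>2 / (2 * (2*pi) powr (2*\<beta>)))"
    using m\<gamma> a by (intro mult_left_mono) auto
  also have "\<dots> < R\<^sup>2 / pi powr (2*\<beta>)"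
    using R by (simp add: powr_mult field_simps)
  finally show ?thesis .
qed

text \<open>The first bound makes the cube admissible and keeps neighbouring vertices close in Hellinger
  distance; the second puts the cube into \<open>W(\<beta>,R)\<close>.\<close>

definition rate_const :: "real \<Rightarrow> real \<Rightarrow> real" where
  "rate_const \<beta> R = min (1 / (16*pi)) (R\<^sup>2 / (2 * (2*pi) powr (2*\<beta>)))"

lemma rate_const_pos: "R > 0 \<Longrightarrow> rate_const \<beta> R > 0"
  unfolding rate_const_def by simp

lemma cube_parameters:
  fixes \<beta> R :: real and n :: nat
  assumes \<beta>: "\<beta> \<ge> 1/2" and R: "R > 0" and n: "n \<ge> 1"
  defines "m \<equiv> nat \<lfloor>real n powr (1 / (2*\<beta>+1))\<rfloor>"
  defines "\<gamma> \<equiv> sqrt (rate_const \<beta> R / real n)"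
  shows "cube_admissible \<gamma> m"
    and "real m * ((real m + 1) powr \<beta>)\<^sup>2 * \<gamma>\<^sup>2 < R\<^sup>2 / pi powr (2*\<beta>)"
    and "4 * pi * \<gamma>\<^sup>2 * real n \<le> 1/4"
    and "rate_const \<beta> R / 8 \<le> real n powr (2*\<beta>/(2*\<beta>+1)) * (real m * \<gamma>\<^sup>2 / 4)"
proof -
  let ?a = "rate_const \<beta> R"
  note m = bandwidth_bounds[OF \<beta> n, folded m_def]
  have n0: "0 < real n" using n by simp
  have a: "0 < ?a" "?a \<le> 1/(16*pi)" "?a \<le> R\<^sup>2 / (2 * (2*pi) powr (2*\<beta>))"
    using rate_const_pos[OF R] unfolding rate_const_def by auto
  have \<gamma>2: "\<gamma>\<^sup>2 = ?a / real n" unfolding \<gamma>_def using a n0 by simp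
  have "\<gamma> * real m = sqrt ?a * (real m / sqrt (real n))"
    unfolding \<gamma>_def by (simp add: real_sqrt_divide)
  also have "\<dots> \<le> sqrt ?a"
    using m(3) n0 a(1) by (intro mult_left_le) (auto simp: divide_le_eq)
  finally show "cube_admissible \<gamma> m"
    using a n0 by (intro cube_admissible_if_le) (auto simp: \<gamma>_def)
  show "4 * pi * \<gamma>\<^sup>2 * real n \<le> 1/4"
    unfolding \<gamma>2 using a(2) n0 by (simp add: field_simps)
  have "real m powr (2*\<beta>+1) * \<gamma>\<^sup>2 \<le> ?a"
    using m(4) n0 a(1) unfolding \<gamma>2 by (simp add: field_simps mult_right_mono)
  then show "real m * ((real m + 1) powr \<beta>)\<^sup>2 * \<gamma>\<^sup>2 < R\<^sup>2 / pi powr (2*\<beta>)"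
    using \<beta> m(1) R a(3) by (intro cube_sobolev_condition) auto
  have "real n powr (2*\<beta>/(2*\<beta>+1)) * real n powr (1 / (2*\<beta>+1)) = real n"
    using n0 \<beta> by (simp add: powr_add[symmetric] add_divide_distrib[symmetric])
  then have "?a / 8 = real n powr (2*\<beta>/(2*\<beta>+1)) * (real n powr (1 / (2*\<beta>+1)) / 2 * \<gamma>\<^sup>2 / 4)"
    unfolding \<gamma>2 using n0 by (simp add: field_simps)
  also have "\<dots> \<le> real n powr (2*\<beta>/(2*\<beta>+1)) * (real m * \<gamma>\<^sup>2 / 4)"
    using m(2) by (intro mult_left_mono divide_right_mono mult_right_mono) auto
  finally show "?a / 8 \<le> real n powr (2*\<beta>/(2*\<beta>+1)) * (real m * \<gamma>\<^sup>2 / 4)" .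
qed

lemma minimax_risk_rate_bound:
  assumes \<beta>: "\<beta> \<ge> 1/2" and R: "R > 0" and Q: "censoring_law Q" and n: "n \<ge> 1"
  shows "ennreal (rate_const \<beta> R / 8) \<le> ennreal (real n powr (2*\<beta>/(2*\<beta>+1))) * minimax_risk \<beta> R Q n"
proof -
  define m where "m = nat \<lfloor>real n powr (1 / (2*\<beta>+1))\<rfloor>"
  define \<gamma> where "\<gamma> = sqrt (rate_const \<beta> R / real n)"
  note params = cube_parameters[OF \<beta> R n, folded m_def \<gamma>_def]
  have "4 * pi * \<gamma>\<^sup>2 * 1 \<le> 4 * pi * \<gamma>\<^sup>2 * real n"
    using n by (intro mult_left_mono) auto
  then have small: "4 * pi * \<gamma>\<^sup>2 \<le> 1"
    using params(3) by linarith
  have "ennreal (rate_const \<beta> R / 8) \<le> ennreal (real n powr (2*\<beta>/(2*\<beta>+1))) * ennreal (real m * \<gamma>\<^sup>2 / 4)"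
    using params(4) by (simp add: ennreal_mult[symmetric] ennreal_leI)
  also have "\<dots> \<le> ennreal (real n powr (2*\<beta>/(2*\<beta>+1))) * minimax_risk \<beta> R Q n"
    using \<beta> by (intro mult_left_mono minimax_risk_ge_cube[OF Q _ params(1,2,3) small]) auto
  finally show ?thesis .
qed

theorem theorem1:
  fixes \<beta> R :: real
  assumes "\<beta> \<ge> 1/2" and "R > 0"
  shows "\<exists>c::real. c > 0 \<and> (\<forall>Q. censoring_law Q \<longrightarrow>
           liminf (\<lambda>n. ennreal (real n powr (2*\<beta>/(2*\<beta>+1))) * minimax_risk \<beta> R Q n)
             \<ge> ennreal c)"
proof (intro exI[of _ "rate_const \<beta> R / 8"] conjI allI impI)
  show "0 < rate_const \<beta> R / 8" using rate_const_pos[OF assms(2)] by simp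
  fix Q assume "censoring_law Q"
  then show "ennreal (rate_const \<beta> R / 8)
      \<le> liminf (\<lambda>n. ennreal (real n powr (2*\<beta>/(2*\<beta>+1))) * minimax_risk \<beta> R Q n)"
    using minimax_risk_rate_bound[OF assms]
    by (intro Liminf_bounded) (auto simp: eventually_sequentially)
qed

end
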